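(* Let $k,n\in\mathbb{N}$. For every $m\in\mathbb{N}$, every $W_0\in\mathbb{R}^{k\times m}$, every convex and $G$-Lipschitz loss $\ell:\mathbb{R}^k\to\mathbb{R}$, and every distribution $\mathcal{D}$ over the Euclidean unit ball of $\mathbb{R}^m$, $$\mathbb{E}_{S\sim\mathcal{D}^n}\big[L(\widehat{W}_* )-L(W^* )\big]=O\!\left(\frac{\sqrt k}{\sqrt n}\right),$$ where the constant in $O(\cdot)$ depends only on $G$.
   Context: Hypothesis set: $\{W\in\mathbb{R}^{k\times m}:\|W-W_0\|_F\le1\}$ with $\|\cdot\|_F$ the Frobenius norm. Population risk $L(W)=\mathbb{E}_{x\sim\mathcal{D}}[\ell(Wx)]$; for $S=\{x_1,\dots,x_n\}$ i.i.d. from $\mathcal{D}$, empirical risk $\widehat{L}(W)=\frac1n\sum_{i=1}^n\ell(Wx_i)$. $W^*$ is a minimizer of $L$ and $\widehat{W}_*$ a minimizer of $\widehat{L}$ over the hypothesis set. *)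

theory Defs
  imports "HOL-Probability.Probability"
begin

text \<open>A vector of R^d is a function nat => real; for the loss domain and for
  matrix-vector products we use vectors that vanish outside the index set {..<d}.
  A k x m matrix is a function nat => nat => real, vanishing outside {..<k} x {..<m}.
  Data points x in R^m are elements of the space of PiM {..<m} (lambda _. borel), i.e. extensional
  functions on {..<m}; only the coordinates x j for j < m are ever used.\<close>

definition is_matrix :: "nat \<Rightarrow> nat \<Rightarrow> (nat \<Rightarrow> nat \<Rightarrow> real) \<Rightarrow> bool" where
  "is_matrix k m W \<longleftrightarrow> (\<forall>i j. (k \<le> i \<or> m \<le> j) \<longrightarrow> W i j = 0)"

definition mat_vec :: "nat \<Rightarrow> nat \<Rightarrow> (nat \<Rightarrow> nat \<Rightarrow> real) \<Rightarrow> (nat \<Rightarrow> real) \<Rightarrow> (nat \<Rightarrow> real)" where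
  "mat_vec k m W x = (\<lambda>i. if i < k then (\<Sum>j<m. W i j * x j) else 0)"

definition frob_dist :: "nat \<Rightarrow> nat \<Rightarrow> (nat \<Rightarrow> nat \<Rightarrow> real) \<Rightarrow> (nat \<Rightarrow> nat \<Rightarrow> real) \<Rightarrow> real" where
  "frob_dist k m W V = sqrt (\<Sum>i<k. \<Sum>j<m. (W i j - V i j)\<^sup>2)"

definition hyp_set :: "nat \<Rightarrow> nat \<Rightarrow> (nat \<Rightarrow> nat \<Rightarrow> real) \<Rightarrow> (nat \<Rightarrow> nat \<Rightarrow> real) set" where
  "hyp_set k m W0 = {W. is_matrix k m W \<and> frob_dist k m W W0 \<le> 1}"

definition vec_space :: "nat \<Rightarrow> (nat \<Rightarrow> real) set" where
  "vec_space k = {y. \<forall>i. k \<le> i \<longrightarrow> y i = 0}"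

definition convex_loss :: "nat \<Rightarrow> ((nat \<Rightarrow> real) \<Rightarrow> real) \<Rightarrow> bool" where
  "convex_loss k l \<longleftrightarrow> (\<forall>y\<in>vec_space k. \<forall>z\<in>vec_space k. \<forall>t::real. 0 \<le> t \<and> t \<le> 1 \<longrightarrow>
      l (\<lambda>i. t * y i + (1 - t) * z i) \<le> t * l y + (1 - t) * l z)"

definition lipschitz_loss :: "nat \<Rightarrow> real \<Rightarrow> ((nat \<Rightarrow> real) \<Rightarrow> real) \<Rightarrow> bool" where
  "lipschitz_loss k G l \<longleftrightarrow> (\<forall>y\<in>vec_space k. \<forall>z\<in>vec_space k.
      \<bar>l y - l z\<bar> \<le> G * sqrt (\<Sum>i<k. (y i - z i)\<^sup>2))"

definition unit_ball_dist :: "nat \<Rightarrow> (nat \<Rightarrow> real) measure \<Rightarrow> bool" where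
  "unit_ball_dist m D \<longleftrightarrow> prob_space D \<and> sets D = sets (PiM {..<m} (\<lambda>_. borel))
      \<and> (AE x in D. (\<Sum>j<m. (x j)\<^sup>2) \<le> 1)"

definition pop_risk :: "nat \<Rightarrow> nat \<Rightarrow> (nat \<Rightarrow> real) measure \<Rightarrow> ((nat \<Rightarrow> real) \<Rightarrow> real)
    \<Rightarrow> (nat \<Rightarrow> nat \<Rightarrow> real) \<Rightarrow> real" where
  "pop_risk k m D l W = (\<integral>x. l (mat_vec k m W x) \<partial>D)"

definition emp_risk :: "nat \<Rightarrow> nat \<Rightarrow> nat \<Rightarrow> ((nat \<Rightarrow> real) \<Rightarrow> real) \<Rightarrow> (nat \<Rightarrow> nat \<Rightarrow> real)
    \<Rightarrow> (nat \<Rightarrow> nat \<Rightarrow> real) \<Rightarrow> real" where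
  "emp_risk k m n l S W = (\<Sum>i<n. l (mat_vec k m W (S i))) / real n"

definition sample_dist :: "nat \<Rightarrow> (nat \<Rightarrow> real) measure \<Rightarrow> (nat \<Rightarrow> nat \<Rightarrow> real) measure" where
  "sample_dist n D = PiM {..<n} (\<lambda>_. D)"

end

theory Submission
  imports Defs
begin

text \<open>The excess risk of an empirical risk minimizer is at most the expected uniform deviation
  between true and empirical risk over the hypothesis set. A ghost sample and random sign swaps
  bound this deviation by twice the Rademacher complexity of the loss class. The vector
  contraction inequality (Maurer), which rests on Khintchine's inequality, removes the
  Lipschitz loss at the price of a factor \<open>\<surd>3 G\<close> and \<open>k\<close> independent signs per data
  point. The resulting Rademacher complexity of the linear class is at most \<open>\<surd>(k n)\<close>
  by Cauchy-Schwarz, since the matrices have Frobenius distance at most one from \<open>W0\<close> and the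
  data lie in the unit ball. Dividing by \<open>n\<close> gives \<open>2 \<surd>3 G \<surd>k / \<surd>n\<close>.\<close>

section \<open>Averages over random signs\<close>

definition sign_vectors :: "'a set \<Rightarrow> ('a \<Rightarrow> real) set" where
  "sign_vectors I = I \<rightarrow>\<^sub>E {-1, 1}"

definition sign_mean :: "'a set \<Rightarrow> (('a \<Rightarrow> real) \<Rightarrow> real) \<Rightarrow> real" where
  "sign_mean I F = (\<Sum>\<sigma>\<in>sign_vectors I. F \<sigma>) / 2 ^ card I"

lemma finite_sign_vectors [simp]: "finite I \<Longrightarrow> finite (sign_vectors I)"
  unfolding sign_vectors_def by (auto intro: finite_PiE)

lemma card_sign_vectors: "finite I \<Longrightarrow> card (sign_vectors I) = 2 ^ card I"
  unfolding sign_vectors_def by (simp add: card_PiE numeral_2_eq_2)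

lemma sign_vectors_value: "\<sigma> \<in> sign_vectors I \<Longrightarrow> x \<in> I \<Longrightarrow> \<sigma> x = -1 \<or> \<sigma> x = 1"
  unfolding sign_vectors_def by auto

lemma sign_mean_const [simp]: "finite I \<Longrightarrow> sign_mean I (\<lambda>_. c) = c"
  unfolding sign_mean_def by (simp add: card_sign_vectors)

lemma sign_mean_add: "sign_mean I (\<lambda>\<sigma>. F \<sigma> + H \<sigma>) = sign_mean I F + sign_mean I H"
  unfolding sign_mean_def by (simp add: sum.distrib add_divide_distrib)

lemma sign_mean_cmult: "sign_mean I (\<lambda>\<sigma>. c * F \<sigma>) = c * sign_mean I F"
  unfolding sign_mean_def by (simp add: sum_distrib_left)

lemma sign_mean_cmult_right: "sign_mean I (\<lambda>\<sigma>. F \<sigma> * c) = sign_mean I F * c"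
  unfolding sign_mean_def by (simp add: sum_distrib_right)

lemma sign_mean_sum: "sign_mean I (\<lambda>\<sigma>. \<Sum>x\<in>A. F x \<sigma>) = (\<Sum>x\<in>A. sign_mean I (F x))"
  unfolding sign_mean_def by (simp add: sum.swap[of _ A] sum_divide_distrib)

lemma sign_mean_mono:
  "(\<And>\<sigma>. \<sigma> \<in> sign_vectors I \<Longrightarrow> F \<sigma> \<le> H \<sigma>) \<Longrightarrow> sign_mean I F \<le> sign_mean I H"
  unfolding sign_mean_def by (intro divide_right_mono sum_mono) auto

lemma sign_mean_cong:
  "(\<And>\<sigma>. \<sigma> \<in> sign_vectors I \<Longrightarrow> F \<sigma> = H \<sigma>) \<Longrightarrow> sign_mean I F = sign_mean I H"
  unfolding sign_mean_def by (intro arg_cong2[where f="(/)"] sum.cong) auto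

lemma sign_mean_nonneg: "(\<And>\<sigma>. 0 \<le> F \<sigma>) \<Longrightarrow> 0 \<le> sign_mean I F"
  unfolding sign_mean_def by (intro divide_nonneg_pos sum_nonneg) auto

lemma sign_mean_midpoint:
  "(sign_mean I F + sign_mean I H) / 2 = sign_mean I (\<lambda>\<sigma>. (F \<sigma> + H \<sigma>) / 2)"
  unfolding sign_mean_def
  by (simp add: sum.distrib add_divide_distrib sum_divide_distrib mult.commute)

lemma sign_mean_empty: "sign_mean {} F = F (\<lambda>_. undefined)"
  unfolding sign_mean_def sign_vectors_def by simp

lemma sign_mean_insert:
  assumes "finite I" "a \<notin> I"
  shows "sign_mean (insert a I) F
    = (sign_mean I (\<lambda>\<sigma>. F (\<sigma>(a := 1))) + sign_mean I (\<lambda>\<sigma>. F (\<sigma>(a := -1)))) / 2"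
proof -
  let ?upd = "\<lambda>(s, \<sigma>). \<sigma>(a := s)"
  have img: "sign_vectors (insert a I) = ?upd ` ({-1, 1} \<times> sign_vectors I)"
    unfolding sign_vectors_def by (rule PiE_insert_eq)
  have inj: "inj_on ?upd ({-1::real, 1} \<times> sign_vectors I)"
    unfolding sign_vectors_def using assms(2) by (rule inj_combinator)
  have "(\<Sum>\<sigma>\<in>sign_vectors (insert a I). F \<sigma>)
      = (\<Sum>s\<in>{-1::real, 1}. \<Sum>\<sigma>\<in>sign_vectors I. F (\<sigma>(a := s)))"
    unfolding img by (subst sum.reindex[OF inj]) (simp add: sum.cartesian_product case_prod_beta)
  then show ?thesis
    using assms unfolding sign_mean_def by (simp add: field_simps)
qed

lemma sign_mean_union:
  assumes "finite J" "finite I" "I \<inter> J = {}"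
  shows "sign_mean (I \<union> J) F
    = sign_mean I (\<lambda>\<sigma>. sign_mean J (\<lambda>\<tau>. F (\<lambda>x. if x \<in> I then \<sigma> x else \<tau> x)))"
  using assms
proof (induction J arbitrary: F rule: finite_induct)
  case empty
  have "(\<lambda>x. if x \<in> I then \<sigma> x else undefined) = \<sigma>" if "\<sigma> \<in> sign_vectors I" for \<sigma>
    using that unfolding sign_vectors_def by (auto simp: fun_eq_iff PiE_iff extensional_def)
  then show ?case by (auto simp: sign_mean_empty intro: sign_mean_cong)
next
  case (insert a J)
  have a: "a \<notin> I" "a \<notin> I \<union> J" using insert by auto
  have upd: "(\<lambda>x. if x \<in> I then \<sigma> x else \<tau> x)(a := s)
      = (\<lambda>x. if x \<in> I then \<sigma> x else (\<tau>(a := s)) x)"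
    for \<sigma> \<tau> :: "'a \<Rightarrow> real" and s
    using a by (auto simp: fun_eq_iff)
  have "sign_mean (I \<union> insert a J) F
      = (sign_mean (I \<union> J) (\<lambda>\<sigma>. F (\<sigma>(a := 1)))
        + sign_mean (I \<union> J) (\<lambda>\<sigma>. F (\<sigma>(a := -1)))) / 2"
    using insert a by (simp add: sign_mean_insert)
  also have "\<dots>
      = sign_mean I (\<lambda>\<sigma>. sign_mean (insert a J) (\<lambda>\<tau>. F (\<lambda>x. if x \<in> I then \<sigma> x else \<tau> x)))"
    using insert by (simp add: upd sign_mean_midpoint sign_mean_insert)
  finally show ?case .
qed

lemma sign_mean_flip:
  assumes "finite I"
  shows "sign_mean I (\<lambda>\<sigma>. F (\<lambda>x\<in>I. - \<sigma> x)) = sign_mean I F"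
proof -
  let ?flip = "\<lambda>\<sigma>::'a \<Rightarrow> real. \<lambda>x\<in>I. - \<sigma> x"
  have "bij_betw ?flip (sign_vectors I) (sign_vectors I)"
    by (rule bij_betwI[where g = ?flip]) (auto simp: sign_vectors_def PiE_iff extensional_def)
  then show ?thesis
    unfolding sign_mean_def by (subst sum.reindex_bij_betw[symmetric]) simp_all
qed

lemma sign_mean_coordinate:
  assumes "finite I" "x \<in> I"
  shows "sign_mean I (\<lambda>\<sigma>. \<sigma> x) = 0"
  using sign_mean_flip[OF assms(1), of "\<lambda>\<sigma>. \<sigma> x"] sign_mean_cmult[of I "-1" "\<lambda>\<sigma>. \<sigma> x"] assms(2)
  by simp

lemma sign_mean_cauchy_schwarz:
  "(sign_mean I (\<lambda>\<sigma>. f \<sigma> * g \<sigma>))\<^sup>2 \<le> sign_mean I (\<lambda>\<sigma>. (f \<sigma>)\<^sup>2) * sign_mean I (\<lambda>\<sigma>. (g \<sigma>)\<^sup>2)"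
proof -
  have "(\<Sum>\<sigma>\<in>sign_vectors I. f \<sigma> * g \<sigma>)\<^sup>2 / (2 ^ card I)\<^sup>2
      \<le> (\<Sum>\<sigma>\<in>sign_vectors I. (f \<sigma>)\<^sup>2) * (\<Sum>\<sigma>\<in>sign_vectors I. (g \<sigma>)\<^sup>2) / (2 ^ card I)\<^sup>2"
    by (intro divide_right_mono Cauchy_Schwarz_ineq_sum) auto
  then show ?thesis unfolding sign_mean_def by (simp add: power_divide power2_eq_square)
qed

lemma sign_mean_le_sqrt_mean_square:
  assumes "finite I"
  shows "sign_mean I f \<le> sqrt (sign_mean I (\<lambda>\<sigma>. (f \<sigma>)\<^sup>2))"
  using sign_mean_cauchy_schwarz[of I f "\<lambda>_. 1"] assms by (simp add: real_le_rsqrt)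

section \<open>Khintchine's inequality\<close>

lemma signed_sum_update_insert:
  assumes "finite J" "a \<notin> J"
  shows "(\<Sum>x\<in>insert a J. (\<sigma>(a := s)) x * u x) = s * u a + (\<Sum>x\<in>J. \<sigma> x * u x)"
proof -
  have "(\<Sum>x\<in>J. (\<sigma>(a := s)) x * u x) = (\<Sum>x\<in>J. \<sigma> x * u x)"
    using assms by (intro sum.cong) auto
  then show ?thesis using assms by simp
qed

lemma sign_mean_signed_sum_square:
  assumes "finite J"
  shows "sign_mean J (\<lambda>\<sigma>. (\<Sum>x\<in>J. \<sigma> x * u x)\<^sup>2) = (\<Sum>x\<in>J. (u x)\<^sup>2)"
  using assms
proof (induction J rule: finite_induct)
  case empty
  then show ?case by (simp add: sign_mean_empty)
next
  case (insert a J)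
  let ?X = "\<lambda>\<sigma>. \<Sum>x\<in>J. \<sigma> x * u x"
  have "sign_mean (insert a J) (\<lambda>\<sigma>. (\<Sum>x\<in>insert a J. \<sigma> x * u x)\<^sup>2)
      = (sign_mean J (\<lambda>\<sigma>. (u a + ?X \<sigma>)\<^sup>2) + sign_mean J (\<lambda>\<sigma>. (- u a + ?X \<sigma>)\<^sup>2)) / 2"
    by (simp only: sign_mean_insert[OF insert(1,2)] signed_sum_update_insert[OF insert(1,2)]) simp
  also have "\<dots> = sign_mean J (\<lambda>\<sigma>. (u a)\<^sup>2 + (?X \<sigma>)\<^sup>2)"
    unfolding sign_mean_midpoint by (intro sign_mean_cong) (simp add: power2_eq_square field_simps)
  also have "\<dots> = (u a)\<^sup>2 + (\<Sum>x\<in>J. (u x)\<^sup>2)"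
    using insert by (simp add: sign_mean_add)
  finally show ?case using insert by simp
qed

lemma sign_mean_signed_subsum_square:
  assumes "finite I" "J \<subseteq> I"
  shows "sign_mean I (\<lambda>\<sigma>. (\<Sum>x\<in>J. \<sigma> x * u x)\<^sup>2) = (\<Sum>x\<in>J. (u x)\<^sup>2)"
proof -
  let ?u = "\<lambda>x. if x \<in> J then u x else 0"
  have restrict: "(\<Sum>x\<in>J. g x) = (\<Sum>x\<in>I. if x \<in> J then g x else 0)" for g :: "'a \<Rightarrow> real"
    using assms by (simp add: sum.inter_restrict[symmetric] Int_absorb1)
  have "(\<Sum>x\<in>J. \<sigma> x * u x) = (\<Sum>x\<in>I. \<sigma> x * ?u x)" for \<sigma> :: "'a \<Rightarrow> real"
    unfolding restrict by (intro sum.cong) auto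
  moreover have "(\<Sum>x\<in>J. (u x)\<^sup>2) = (\<Sum>x\<in>I. (?u x)\<^sup>2)"
    unfolding restrict by (intro sum.cong) auto
  ultimately show ?thesis
    using sign_mean_signed_sum_square[OF assms(1), of ?u] by simp
qed

lemma sign_mean_signed_sum_fourth:
  assumes "finite J"
  shows "sign_mean J (\<lambda>\<sigma>. (\<Sum>x\<in>J. \<sigma> x * u x) ^ 4) \<le> 3 * (\<Sum>x\<in>J. (u x)\<^sup>2)\<^sup>2"
  using assms
proof (induction J rule: finite_induct)
  case empty
  then show ?case by (simp add: sign_mean_empty)
next
  case (insert a J)
  let ?X = "\<lambda>\<sigma>. \<Sum>x\<in>J. \<sigma> x * u x"
  let ?s = "\<Sum>x\<in>J. (u x)\<^sup>2"
  have "sign_mean (insert a J) (\<lambda>\<sigma>. (\<Sum>x\<in>insert a J. \<sigma> x * u x) ^ 4)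
      = (sign_mean J (\<lambda>\<sigma>. (u a + ?X \<sigma>) ^ 4) + sign_mean J (\<lambda>\<sigma>. (- u a + ?X \<sigma>) ^ 4)) / 2"
    by (simp only: sign_mean_insert[OF insert(1,2)] signed_sum_update_insert[OF insert(1,2)]) simp
  also have "\<dots> = sign_mean J (\<lambda>\<sigma>. (?X \<sigma>) ^ 4 + 6 * (u a)\<^sup>2 * (?X \<sigma>)\<^sup>2 + (u a) ^ 4)"
    unfolding sign_mean_midpoint
    by (intro sign_mean_cong) (simp add: power2_eq_square field_simps power4_eq_xxxx)
  also have "\<dots> = sign_mean J (\<lambda>\<sigma>. (?X \<sigma>) ^ 4) + 6 * (u a)\<^sup>2 * ?s + (u a) ^ 4"
    using insert by (simp add: sign_mean_add sign_mean_cmult sign_mean_signed_sum_square)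
  also have "\<dots> \<le> 3 * ?s\<^sup>2 + 6 * (u a)\<^sup>2 * ?s + (u a) ^ 4"
    using insert by simp
  also have "\<dots> \<le> 3 * ((u a)\<^sup>2 + ?s)\<^sup>2"
    using zero_le_power2[of "(u a)\<^sup>2"] by (simp add: power2_eq_square power4_eq_xxxx algebra_simps)
  finally show ?case using insert by simp
qed

text \<open>Two applications of Cauchy-Schwarz, splitting \<open>f\<^sup>2 = |f|\<^sup>1\<^sup>/\<^sup>2 |f|\<^sup>3\<^sup>/\<^sup>2\<close> and
  \<open>|f|\<^sup>3 = |f| f\<^sup>2\<close>.\<close>

lemma sign_mean_square_cube_le:
  "(sign_mean I (\<lambda>\<sigma>. (f \<sigma>)\<^sup>2)) ^ 3
    \<le> (sign_mean I (\<lambda>\<sigma>. \<bar>f \<sigma>\<bar>))\<^sup>2 * sign_mean I (\<lambda>\<sigma>. (f \<sigma>) ^ 4)"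
proof -
  define s where "s = sign_mean I (\<lambda>\<sigma>. (f \<sigma>)\<^sup>2)"
  define a where "a = sign_mean I (\<lambda>\<sigma>. \<bar>f \<sigma>\<bar>)"
  define b where "b = sign_mean I (\<lambda>\<sigma>. \<bar>f \<sigma>\<bar> * (f \<sigma>)\<^sup>2)"
  define q where "q = sign_mean I (\<lambda>\<sigma>. (f \<sigma>) ^ 4)"
  have s0: "0 \<le> s" and q0: "0 \<le> q"
    unfolding s_def q_def by (simp_all add: sign_mean_nonneg)
  have "sqrt \<bar>y\<bar> * (sqrt \<bar>y\<bar> * \<bar>y\<bar>) = y\<^sup>2" "(sqrt \<bar>y\<bar> * \<bar>y\<bar>)\<^sup>2 = \<bar>y\<bar> * y\<^sup>2" for y :: real
    by (simp_all add: mult.assoc[symmetric] power2_eq_square)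
  then have "s\<^sup>2 \<le> a * b"
    using sign_mean_cauchy_schwarz[of I "\<lambda>\<sigma>. sqrt \<bar>f \<sigma>\<bar>" "\<lambda>\<sigma>. sqrt \<bar>f \<sigma>\<bar> * \<bar>f \<sigma>\<bar>"]
    unfolding s_def a_def b_def by simp
  moreover have "b\<^sup>2 \<le> s * q"
    using sign_mean_cauchy_schwarz[of I "\<lambda>\<sigma>. \<bar>f \<sigma>\<bar>" "\<lambda>\<sigma>. (f \<sigma>)\<^sup>2"]
    unfolding s_def b_def q_def by (simp add: power_mult_distrib flip: power_mult)
  ultimately have "s * s ^ 3 \<le> s * (a\<^sup>2 * q)"
  proof -
    assume ab: "s\<^sup>2 \<le> a * b" and bq: "b\<^sup>2 \<le> s * q"
    have "(s\<^sup>2)\<^sup>2 \<le> (a * b)\<^sup>2" using ab s0 by (intro power_mono) auto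
    also have "\<dots> \<le> a\<^sup>2 * (s * q)" using bq by (simp add: power_mult_distrib mult_left_mono)
    finally show ?thesis by (simp add: power2_eq_square power3_eq_cube algebra_simps)
  qed
  then have "s ^ 3 \<le> a\<^sup>2 * q"
    using s0 q0 by (cases "s = 0") (auto simp: mult_le_cancel_left)
  then show ?thesis unfolding s_def a_def q_def .
qed

text \<open>The constant \<open>\<surd>3\<close> comes from the fourth moment bound; the optimal constant is \<open>\<surd>2\<close>.\<close>

theorem khintchine:
  assumes "finite J"
  shows "sqrt (\<Sum>x\<in>J. (u x)\<^sup>2) \<le> sqrt 3 * sign_mean J (\<lambda>\<sigma>. \<bar>\<Sum>x\<in>J. \<sigma> x * u x\<bar>)"
proof -
  define s where "s = (\<Sum>x\<in>J. (u x)\<^sup>2)"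
  define a where "a = sign_mean J (\<lambda>\<sigma>. \<bar>\<Sum>x\<in>J. \<sigma> x * u x\<bar>)"
  have s0: "0 \<le> s" unfolding s_def by (simp add: sum_nonneg)
  have a0: "0 \<le> a" unfolding a_def by (rule sign_mean_nonneg) simp
  have "s ^ 3 \<le> a\<^sup>2 * sign_mean J (\<lambda>\<sigma>. (\<Sum>x\<in>J. \<sigma> x * u x) ^ 4)"
    using sign_mean_square_cube_le[of J "\<lambda>\<sigma>. \<Sum>x\<in>J. \<sigma> x * u x"]
    unfolding s_def a_def sign_mean_signed_sum_square[OF assms] .
  also have "\<dots> \<le> a\<^sup>2 * (3 * s\<^sup>2)"
    unfolding s_def by (intro mult_left_mono sign_mean_signed_sum_fourth assms) simp
  finally have "s ^ 3 \<le> a\<^sup>2 * (3 * s\<^sup>2)" .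
  then have "s \<le> 3 * a\<^sup>2"
    using s0 by (cases "s = 0") (auto simp: power2_eq_square power3_eq_cube mult_le_cancel_right)
  then have "sqrt s \<le> sqrt (3 * a\<^sup>2)" by simp
  then show ?thesis using a0 unfolding s_def a_def by (simp add: real_sqrt_mult)
qed

section \<open>The vector contraction inequality\<close>

lemma abs_signed_sum_le:
  fixes e w :: "'a \<Rightarrow> real"
  assumes "finite J" "\<And>x. x \<in> J \<Longrightarrow> \<bar>w x\<bar> \<le> B"
  shows "\<bar>\<Sum>x\<in>J. e x * w x\<bar> \<le> (\<Sum>x\<in>J. \<bar>e x\<bar>) * B"
proof -
  have "\<bar>\<Sum>x\<in>J. e x * w x\<bar> \<le> (\<Sum>x\<in>J. \<bar>e x\<bar> * \<bar>w x\<bar>)"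
    unfolding abs_mult[symmetric] by (rule sum_abs)
  also have "\<dots> \<le> (\<Sum>x\<in>J. \<bar>e x\<bar> * B)"
    using assms(2) by (intro sum_mono mult_left_mono) auto
  finally show ?thesis by (simp add: sum_distrib_right)
qed

lemma bdd_above_add_signed_sum:
  fixes A :: "'t \<Rightarrow> real" and w :: "'t \<Rightarrow> 'a \<Rightarrow> real" and \<sigma> :: "'a \<Rightarrow> real"
  assumes "finite J" "\<And>t. t \<in> T \<Longrightarrow> \<bar>A t\<bar> \<le> BA" "\<And>t x. t \<in> T \<Longrightarrow> x \<in> J \<Longrightarrow> \<bar>w t x\<bar> \<le> B"
  shows "bdd_above ((\<lambda>t. A t + d * (\<Sum>x\<in>J. \<sigma> x * w t x)) ` T)"
proof (rule bdd_aboveI2)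
  fix t assume t: "t \<in> T"
  have "\<bar>d * (\<Sum>x\<in>J. \<sigma> x * w t x)\<bar> \<le> \<bar>d\<bar> * ((\<Sum>x\<in>J. \<bar>\<sigma> x\<bar>) * B)"
    unfolding abs_mult using assms(1,3) t by (intro mult_left_mono abs_signed_sum_le) auto
  then show "A t + d * (\<Sum>x\<in>J. \<sigma> x * w t x) \<le> BA + \<bar>d\<bar> * ((\<Sum>x\<in>J. \<bar>\<sigma> x\<bar>) * B)"
    using assms(2)[OF t] by linarith
qed

lemma sign_mean_sup_flip:
  fixes A :: "'t \<Rightarrow> real" and w :: "'t \<Rightarrow> 'a \<Rightarrow> real"
  assumes "finite J"
  shows "sign_mean J (\<lambda>\<sigma>. SUP t\<in>T. A t - d * (\<Sum>x\<in>J. \<sigma> x * w t x))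
    = sign_mean J (\<lambda>\<sigma>. SUP t\<in>T. A t + d * (\<Sum>x\<in>J. \<sigma> x * w t x))"
proof -
  have "(\<Sum>x\<in>J. (\<lambda>x\<in>J. - \<sigma> x) x * w t x) = - (\<Sum>x\<in>J. \<sigma> x * w t x)" for \<sigma> t
    by (simp add: sum_negf[symmetric])
  then show ?thesis
    using sign_mean_flip[OF assms, of "\<lambda>\<sigma>. SUP t\<in>T. A t + d * (\<Sum>x\<in>J. \<sigma> x * w t x)"] by simp
qed

text \<open>Khintchine's inequality replaces the Euclidean distance in the Lipschitz bound by the
  difference of two Rademacher sums, and flipping all signs swaps the roles of \<open>t\<close> and \<open>t'\<close>.\<close>

lemma vector_contraction_step:
  fixes A \<phi> :: "'t \<Rightarrow> real" and w :: "'t \<Rightarrow> 'a \<Rightarrow> real"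
  assumes J: "finite J" and T: "T \<noteq> {}" and G: "0 \<le> G"
    and A_bound: "\<And>t. t \<in> T \<Longrightarrow> \<bar>A t\<bar> \<le> BA"
    and w_bound: "\<And>t x. t \<in> T \<Longrightarrow> x \<in> J \<Longrightarrow> \<bar>w t x\<bar> \<le> B"
    and lip: "\<And>t t'. t \<in> T \<Longrightarrow> t' \<in> T \<Longrightarrow> \<bar>\<phi> t - \<phi> t'\<bar> \<le> G * sqrt (\<Sum>x\<in>J. (w t x - w t' x)\<^sup>2)"
  shows "(SUP t\<in>T. A t + \<phi> t) + (SUP t\<in>T. A t - \<phi> t)
    \<le> 2 * sign_mean J (\<lambda>\<sigma>. SUP t\<in>T. A t + sqrt 3 * G * (\<Sum>x\<in>J. \<sigma> x * w t x))"
proof -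
  define c where "c = sqrt 3 * G"
  define Y where "Y \<sigma> t = (\<Sum>x\<in>J. \<sigma> x * w t x)" for \<sigma> t
  define H where "H d \<sigma> = (SUP t\<in>T. A t + d * Y \<sigma> t)" for d \<sigma>
  have upper: "A t + d * Y \<sigma> t \<le> H d \<sigma>" if "t \<in> T" for t d \<sigma>
    unfolding H_def Y_def using that bdd_above_add_signed_sum[OF J A_bound w_bound]
    by (rule cSUP_upper)
  have pair: "(A t + \<phi> t) + (A t' - \<phi> t') \<le> 2 * sign_mean J (H c)"
    if t: "t \<in> T" and t': "t' \<in> T" for t t'
  proof -
    have "(A t + \<phi> t) + (A t' - \<phi> t') \<le> A t + A t' + G * sqrt (\<Sum>x\<in>J. (w t x - w t' x)\<^sup>2)"
      using lip[OF t t'] by linarith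
    also have "\<dots> \<le> A t + A t' + G * (sqrt 3 * sign_mean J (\<lambda>\<sigma>. \<bar>\<Sum>x\<in>J. \<sigma> x * (w t x - w t' x)\<bar>))"
      using khintchine[OF J, of "\<lambda>x. w t x - w t' x"] G by (intro add_left_mono mult_left_mono)
    also have "\<dots> = sign_mean J (\<lambda>\<sigma>. A t + A t' + c * \<bar>Y \<sigma> t - Y \<sigma> t'\<bar>)"
      using J unfolding c_def Y_def
      by (simp add: sign_mean_add sign_mean_cmult right_diff_distrib sum_subtractf)
    also have "\<dots> \<le> sign_mean J (\<lambda>\<sigma>. H c \<sigma> + H (- c) \<sigma>)"
    proof (rule sign_mean_mono)
      fix \<sigma>
      show "A t + A t' + c * \<bar>Y \<sigma> t - Y \<sigma> t'\<bar> \<le> H c \<sigma> + H (- c) \<sigma>"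
        using upper[OF t, of c \<sigma>] upper[OF t', of "- c" \<sigma>]
          upper[OF t', of c \<sigma>] upper[OF t, of "- c" \<sigma>]
        by (cases "Y \<sigma> t' \<le> Y \<sigma> t") (auto simp: abs_if algebra_simps)
    qed
    also have "\<dots> = 2 * sign_mean J (H c)"
      using sign_mean_sup_flip[OF J, where T = T and A = A and d = c and w = w]
      unfolding H_def Y_def by (simp add: sign_mean_add)
    finally show ?thesis .
  qed
  have "(SUP t\<in>T. A t + \<phi> t) \<le> 2 * sign_mean J (H c) - (A t' - \<phi> t')" if "t' \<in> T" for t'
    using pair[OF _ that] by (intro cSUP_least T) (simp add: algebra_simps)
  then have "(SUP t'\<in>T. A t' - \<phi> t') \<le> 2 * sign_mean J (H c) - (SUP t\<in>T. A t + \<phi> t)"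
    by (intro cSUP_least T) (simp add: algebra_simps)
  then show ?thesis unfolding H_def Y_def c_def by simp
qed

lemma vector_contraction_block:
  fixes A \<phi> :: "'t \<Rightarrow> real" and v :: "'t \<Rightarrow> 'j \<Rightarrow> real"
  assumes J: "finite J" and T: "T \<noteq> {}" and G: "0 \<le> G"
    and A_bound: "\<And>t. t \<in> T \<Longrightarrow> \<bar>A t\<bar> \<le> BA"
    and v_bound: "\<And>t j. t \<in> T \<Longrightarrow> j \<in> J \<Longrightarrow> \<bar>v t j\<bar> \<le> B"
    and lip: "\<And>t t'. t \<in> T \<Longrightarrow> t' \<in> T \<Longrightarrow> \<bar>\<phi> t - \<phi> t'\<bar> \<le> G * sqrt (\<Sum>j\<in>J. (v t j - v t' j)\<^sup>2)"
  shows "((SUP t\<in>T. A t + \<phi> t) + (SUP t\<in>T. A t - \<phi> t)) / 2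
    \<le> sign_mean ({a} \<times> J) (\<lambda>\<delta>. SUP t\<in>T. A t + sqrt 3 * G * (\<Sum>j\<in>J. \<delta> (a, j) * v t j))"
proof -
  have "(SUP t\<in>T. A t + \<phi> t) + (SUP t\<in>T. A t - \<phi> t)
      \<le> 2 * sign_mean ({a} \<times> J) (\<lambda>\<delta>. SUP t\<in>T. A t + sqrt 3 * G * (\<Sum>p\<in>{a} \<times> J. \<delta> p * v t (snd p)))"
    by (rule vector_contraction_step[OF _ T G A_bound, where B = B])
      (use J v_bound lip in \<open>auto simp: sum.cartesian_product'\<close>)
  then show ?thesis by (simp add: sum.cartesian_product')
qed

lemma sign_mean_Times_insert:
  fixes F :: "('t \<Rightarrow> real) \<Rightarrow> ('t \<Rightarrow> real) \<Rightarrow> real" and v :: "'i \<Rightarrow> 't \<Rightarrow> 'j \<Rightarrow> real"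
  assumes "finite I" "finite J" "a \<notin> I"
  shows "sign_mean (insert a I \<times> J)
      (\<lambda>\<epsilon>. F (\<lambda>t. \<Sum>i\<in>I. \<Sum>j\<in>J. \<epsilon> (i, j) * v i t j) (\<lambda>t. \<Sum>j\<in>J. \<epsilon> (a, j) * v a t j))
    = sign_mean (I \<times> J) (\<lambda>\<epsilon>. sign_mean ({a} \<times> J)
      (\<lambda>\<delta>. F (\<lambda>t. \<Sum>i\<in>I. \<Sum>j\<in>J. \<epsilon> (i, j) * v i t j) (\<lambda>t. \<Sum>j\<in>J. \<delta> (a, j) * v a t j)))"
proof -
  have union: "insert a I \<times> J = I \<times> J \<union> {a} \<times> J" by auto
  have "(\<Sum>i\<in>I. \<Sum>j\<in>J. (if (i, j) \<in> I \<times> J then \<epsilon> (i, j) else \<delta> (i, j)) * v i t j)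
      = (\<Sum>i\<in>I. \<Sum>j\<in>J. \<epsilon> (i, j) * v i t j)" for \<epsilon> \<delta> :: "'i \<times> 'j \<Rightarrow> real" and t
    by (intro sum.cong) auto
  then show ?thesis
    unfolding union using assms by (subst sign_mean_union) auto
qed

text \<open>Induction on the data points: averaging out the sign of a new point \<open>a\<close> leaves the pair of
  suprema handled by \<open>vector_contraction_block\<close>, which trades that sign for the block
  \<open>{a} \<times> J\<close> of fresh signs.\<close>

theorem vector_contraction:
  fixes \<phi> :: "'i \<Rightarrow> 't \<Rightarrow> real" and v :: "'i \<Rightarrow> 't \<Rightarrow> 'j \<Rightarrow> real" and A :: "'t \<Rightarrow> real"
  assumes I: "finite I" and J: "finite J" and T: "T \<noteq> {}" and G: "0 \<le> G"
    and \<phi>_bound: "\<And>i t. i \<in> I \<Longrightarrow> t \<in> T \<Longrightarrow> \<bar>\<phi> i t\<bar> \<le> B"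
    and v_bound: "\<And>i t j. i \<in> I \<Longrightarrow> t \<in> T \<Longrightarrow> j \<in> J \<Longrightarrow> \<bar>v i t j\<bar> \<le> B"
    and lip: "\<And>i t t'. i \<in> I \<Longrightarrow> t \<in> T \<Longrightarrow> t' \<in> T \<Longrightarrow>
      \<bar>\<phi> i t - \<phi> i t'\<bar> \<le> G * sqrt (\<Sum>j\<in>J. (v i t j - v i t' j)\<^sup>2)"
    and A_bound: "\<And>t. t \<in> T \<Longrightarrow> \<bar>A t\<bar> \<le> BA"
  shows "sign_mean I (\<lambda>\<sigma>. SUP t\<in>T. A t + (\<Sum>i\<in>I. \<sigma> i * \<phi> i t))
    \<le> sign_mean (I \<times> J) (\<lambda>\<epsilon>. SUP t\<in>T. A t + sqrt 3 * G * (\<Sum>i\<in>I. \<Sum>j\<in>J. \<epsilon> (i, j) * v i t j))"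
  using I \<phi>_bound v_bound lip A_bound
proof (induction I arbitrary: A BA rule: finite_induct)
  case empty
  then show ?case by (simp add: sign_mean_empty)
next
  case (insert a I)
  define Ae where "Ae \<epsilon> t = A t + sqrt 3 * G * (\<Sum>i\<in>I. \<Sum>j\<in>J. \<epsilon> (i, j) * v i t j)" for \<epsilon> t
  have IH: "sign_mean I (\<lambda>\<sigma>. SUP t\<in>T. (A t + s * \<phi> a t) + (\<Sum>i\<in>I. \<sigma> i * \<phi> i t))
      \<le> sign_mean (I \<times> J) (\<lambda>\<epsilon>. SUP t\<in>T. Ae \<epsilon> t + s * \<phi> a t)" if s: "\<bar>s\<bar> = 1" for s
  proof -
    have "\<bar>A t + s * \<phi> a t\<bar> \<le> BA + B" if "t \<in> T" for t
      using abs_triangle_ineq[of "A t" "s * \<phi> a t"] insert.prems(1)[of a t]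
        insert.prems(4)[OF that] s that
      by (simp add: abs_mult)
    then show ?thesis
      using insert.IH[of "\<lambda>t. A t + s * \<phi> a t" "BA + B"] insert.prems(1-3)
      unfolding Ae_def by (simp add: algebra_simps)
  qed
  have "sign_mean (insert a I) (\<lambda>\<sigma>. SUP t\<in>T. A t + (\<Sum>i\<in>insert a I. \<sigma> i * \<phi> i t))
      = (sign_mean I (\<lambda>\<sigma>. SUP t\<in>T. (A t + 1 * \<phi> a t) + (\<Sum>i\<in>I. \<sigma> i * \<phi> i t))
       + sign_mean I (\<lambda>\<sigma>. SUP t\<in>T. (A t + (-1) * \<phi> a t) + (\<Sum>i\<in>I. \<sigma> i * \<phi> i t))) / 2"
    by (simp only: sign_mean_insert[OF insert.hyps] signed_sum_update_insert[OF insert.hyps])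
      (simp add: algebra_simps)
  also have "\<dots> \<le> (sign_mean (I \<times> J) (\<lambda>\<epsilon>. SUP t\<in>T. Ae \<epsilon> t + \<phi> a t)
      + sign_mean (I \<times> J) (\<lambda>\<epsilon>. SUP t\<in>T. Ae \<epsilon> t - \<phi> a t)) / 2"
    using IH[of 1] IH[of "-1"] by simp
  also have "\<dots> \<le> sign_mean (I \<times> J) (\<lambda>\<epsilon>. sign_mean ({a} \<times> J)
      (\<lambda>\<delta>. SUP t\<in>T. Ae \<epsilon> t + sqrt 3 * G * (\<Sum>j\<in>J. \<delta> (a, j) * v a t j)))"
    unfolding sign_mean_midpoint
  proof (intro sign_mean_mono vector_contraction_block[OF J T G, where B = B])
    fix \<epsilon> :: "'i \<times> 'j \<Rightarrow> real" and t assume t: "t \<in> T"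
    have "\<bar>\<Sum>p\<in>I \<times> J. \<epsilon> p * v (fst p) t (snd p)\<bar> \<le> (\<Sum>p\<in>I \<times> J. \<bar>\<epsilon> p\<bar>) * B"
      using insert.hyps(1) J insert.prems(2) t by (intro abs_signed_sum_le) auto
    then show "\<bar>Ae \<epsilon> t\<bar> \<le> BA + sqrt 3 * G * ((\<Sum>p\<in>I \<times> J. \<bar>\<epsilon> p\<bar>) * B)"
      unfolding Ae_def sum.cartesian_product' using insert.prems(4)[OF t] G
      by (intro order_trans[OF abs_triangle_ineq] add_mono) (simp_all add: abs_mult mult_left_mono)
  qed (use insert.prems(2,3) in auto)
  also have "\<dots> = sign_mean (insert a I \<times> J)
      (\<lambda>\<epsilon>. SUP t\<in>T. A t + sqrt 3 * G * (\<Sum>i\<in>insert a I. \<Sum>j\<in>J. \<epsilon> (i, j) * v i t j))"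
    using sign_mean_Times_insert[OF insert.hyps(1) J insert.hyps(2),
        of "\<lambda>X Y. SUP t\<in>T. A t + sqrt 3 * G * (X t + Y t)" v]
    by (simp add: Ae_def insert.hyps algebra_simps)
  finally show ?case .
qed

section \<open>Matrices within Frobenius distance one\<close>

definition vec_norm :: "nat \<Rightarrow> (nat \<Rightarrow> real) \<Rightarrow> real" where
  "vec_norm m x = sqrt (\<Sum>j<m. (x j)\<^sup>2)"

definition frob_norm :: "nat \<Rightarrow> nat \<Rightarrow> (nat \<Rightarrow> nat \<Rightarrow> real) \<Rightarrow> real" where
  "frob_norm k m W = sqrt (\<Sum>i<k. \<Sum>j<m. (W i j)\<^sup>2)"

lemma frob_dist_eq_frob_norm: "frob_dist k m W V = frob_norm k m (\<lambda>i j. W i j - V i j)"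
  unfolding frob_dist_def frob_norm_def ..

lemma frob_norm_eq_L2_set: "frob_norm k m W = L2_set (\<lambda>p. W (fst p) (snd p)) ({..<k} \<times> {..<m})"
  unfolding frob_norm_def L2_set_def by (simp add: sum.cartesian_product case_prod_beta)

lemma frob_norm_nonneg: "0 \<le> frob_norm k m W"
  unfolding frob_norm_def by (simp add: sum_nonneg)

lemma vec_norm_nonneg: "0 \<le> vec_norm m x"
  unfolding vec_norm_def by (simp add: sum_nonneg)

lemma frob_norm_triangle: "frob_norm k m (\<lambda>i j. A i j + B i j) \<le> frob_norm k m A + frob_norm k m B"
  unfolding frob_norm_eq_L2_set by (rule L2_set_triangle_ineq)

lemma frob_norm_scale: "frob_norm k m (\<lambda>i j. c * A i j) = \<bar>c\<bar> * frob_norm k m A"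
  unfolding frob_norm_def
  by (simp add: power_mult_distrib sum_distrib_left[symmetric] real_sqrt_mult)

lemma frob_inner_le: "(\<Sum>i<k. \<Sum>j<m. A i j * M i j) \<le> frob_norm k m A * frob_norm k m M"
proof -
  have "(\<Sum>i<k. \<Sum>j<m. A i j * M i j) = (\<Sum>p\<in>{..<k} \<times> {..<m}. A (fst p) (snd p) * M (fst p) (snd p))"
    by (simp add: sum.cartesian_product case_prod_beta)
  also have "\<dots> \<le> (\<Sum>p\<in>{..<k} \<times> {..<m}. \<bar>A (fst p) (snd p)\<bar> * \<bar>M (fst p) (snd p)\<bar>)"
    by (intro sum_mono) (metis abs_ge_self abs_mult)
  also have "\<dots> \<le> frob_norm k m A * frob_norm k m M"
    unfolding frob_norm_eq_L2_set by (rule L2_set_mult_ineq)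
  finally show ?thesis .
qed

lemma frob_norm_le_of_hyp_set:
  assumes "W \<in> hyp_set k m W0"
  shows "frob_norm k m W \<le> frob_norm k m W0 + 1"
  using frob_norm_triangle[of k m W0 "\<lambda>i j. W i j - W0 i j"] assms
  unfolding hyp_set_def frob_dist_eq_frob_norm by simp

lemma mat_vec_in_vec_space: "mat_vec k m W x \<in> vec_space k"
  unfolding vec_space_def mat_vec_def by auto

lemma norm_mat_vec_le: "sqrt (\<Sum>i<k. (mat_vec k m W x i)\<^sup>2) \<le> frob_norm k m W * vec_norm m x"
proof -
  have "(\<Sum>i<k. (mat_vec k m W x i)\<^sup>2) \<le> (\<Sum>i<k. (\<Sum>j<m. (W i j)\<^sup>2) * (\<Sum>j<m. (x j)\<^sup>2))"
    unfolding mat_vec_def by (intro sum_mono) (simp add: Cauchy_Schwarz_ineq_sum)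
  then show ?thesis
    unfolding frob_norm_def vec_norm_def
    by (simp add: sum_distrib_right[symmetric] real_sqrt_mult[symmetric])
qed

lemma norm_mat_vec_diff_le:
  "sqrt (\<Sum>i<k. (mat_vec k m W x i - mat_vec k m V x i)\<^sup>2) \<le> frob_dist k m W V * vec_norm m x"
proof -
  have "mat_vec k m W x i - mat_vec k m V x i = mat_vec k m (\<lambda>i j. W i j - V i j) x i" for i
    unfolding mat_vec_def by (simp add: sum_subtractf left_diff_distrib)
  then show ?thesis unfolding frob_dist_eq_frob_norm using norm_mat_vec_le by presburger
qed

lemma abs_mat_vec_le: "\<bar>mat_vec k m W x i\<bar> \<le> frob_norm k m W * vec_norm m x"
proof (cases "i < k")
  case True
  then have "\<bar>mat_vec k m W x i\<bar> \<le> sqrt (\<Sum>i<k. (mat_vec k m W x i)\<^sup>2)"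
    by (metis finite_lessThan lessThan_iff member_le_sum real_sqrt_abs real_sqrt_le_mono
        zero_le_power2)
  then show ?thesis using norm_mat_vec_le by (rule order_trans)
next
  case False
  then show ?thesis unfolding mat_vec_def by (simp add: frob_norm_nonneg vec_norm_nonneg)
qed

lemma lipschitz_lossD:
  "lipschitz_loss k G l \<Longrightarrow> y \<in> vec_space k \<Longrightarrow> z \<in> vec_space k
    \<Longrightarrow> \<bar>l y - l z\<bar> \<le> G * sqrt (\<Sum>i<k. (y i - z i)\<^sup>2)"
  unfolding lipschitz_loss_def by blast

lemma loss_mat_vec_lipschitz:
  assumes "lipschitz_loss k G l" "0 \<le> G"
  shows "\<bar>l (mat_vec k m W x) - l (mat_vec k m V x)\<bar> \<le> G * (frob_dist k m W V * vec_norm m x)"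
  using lipschitz_lossD[OF assms(1) mat_vec_in_vec_space mat_vec_in_vec_space]
    mult_left_mono[OF norm_mat_vec_diff_le assms(2)] by (rule order_trans)

lemma abs_loss_mat_vec_le:
  assumes "lipschitz_loss k G l" "0 \<le> G" "W \<in> hyp_set k m W0"
  shows "\<bar>l (mat_vec k m W x)\<bar> \<le> \<bar>l (\<lambda>_. 0)\<bar> + G * (frob_norm k m W0 + 1) * vec_norm m x"
proof -
  have "(\<lambda>_. 0) \<in> vec_space k" unfolding vec_space_def by simp
  then have "\<bar>l (mat_vec k m W x) - l (\<lambda>_. 0)\<bar> \<le> G * sqrt (\<Sum>i<k. (mat_vec k m W x i)\<^sup>2)"
    using lipschitz_lossD[OF assms(1) mat_vec_in_vec_space] by fastforce
  also have "\<dots> \<le> G * (frob_norm k m W * vec_norm m x)"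
    using assms(2) norm_mat_vec_le by (intro mult_left_mono)
  also have "\<dots> \<le> G * ((frob_norm k m W0 + 1) * vec_norm m x)"
    using assms frob_norm_le_of_hyp_set vec_norm_nonneg
    by (intro mult_left_mono mult_right_mono) auto
  finally show ?thesis by (simp add: mult.assoc)
qed

lemma abs_loss_mat_vec_le_on_ball:
  assumes "lipschitz_loss k G l" "0 \<le> G" "W \<in> hyp_set k m W0" "vec_norm m x \<le> 1"
  shows "\<bar>l (mat_vec k m W x)\<bar> \<le> \<bar>l (\<lambda>_. 0)\<bar> + G * (frob_norm k m W0 + 1)"
proof -
  have "G * (frob_norm k m W0 + 1) * vec_norm m x \<le> G * (frob_norm k m W0 + 1) * 1"
    using assms(2,4) frob_norm_nonneg[of k m W0] by (intro mult_left_mono) auto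
  then show ?thesis using abs_loss_mat_vec_le[OF assms(1-3), of x] by simp
qed

lemma abs_mat_vec_le_on_ball:
  assumes "W \<in> hyp_set k m W0" "vec_norm m x \<le> 1"
  shows "\<bar>mat_vec k m W x i\<bar> \<le> frob_norm k m W0 + 1"
proof -
  have "frob_norm k m W * vec_norm m x \<le> (frob_norm k m W0 + 1) * 1"
    using assms frob_norm_le_of_hyp_set[OF assms(1)] frob_norm_nonneg vec_norm_nonneg
    by (intro mult_mono) auto
  then show ?thesis using abs_mat_vec_le[of k m W x i] by simp
qed

section \<open>Rademacher complexity of the loss class\<close>

lemma signed_sum_mat_vec_eq:
  fixes n :: nat
  shows "(\<Sum>i<n. \<Sum>j<k. \<epsilon> (i, j) * mat_vec k m W (x i) j)
    = (\<Sum>j<k. \<Sum>l<m. W j l * (\<Sum>i<n. \<epsilon> (i, j) * x i l))"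
proof -
  have "(\<Sum>i<n. \<Sum>j<k. \<epsilon> (i, j) * mat_vec k m W (x i) j)
      = (\<Sum>i<n. \<Sum>j<k. \<Sum>l<m. W j l * (\<epsilon> (i, j) * x i l))"
    unfolding mat_vec_def by (simp add: sum_distrib_left algebra_simps)
  also have "\<dots> = (\<Sum>j<k. \<Sum>l<m. \<Sum>i<n. W j l * (\<epsilon> (i, j) * x i l))"
    by (subst sum.swap) (simp add: sum.swap[of _ "{..<n}"])
  finally show ?thesis by (simp add: sum_distrib_left)
qed

lemma sign_mean_signed_data_square:
  fixes x :: "nat \<Rightarrow> nat \<Rightarrow> real" and n k :: nat
  assumes "j < k"
  shows "sign_mean ({..<n} \<times> {..<k}) (\<lambda>\<epsilon>. (\<Sum>i<n. \<epsilon> (i, j) * x i l)\<^sup>2) = (\<Sum>i<n. (x i l)\<^sup>2)"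
proof -
  have "finite ({..<n} \<times> {..<k})" "{..<n} \<times> {j} \<subseteq> {..<n} \<times> {..<k}"
    using assms by auto
  from sign_mean_signed_subsum_square[OF this, of "\<lambda>p. x (fst p) l"]
  show ?thesis by (simp add: sum.cartesian_product')
qed

lemma sign_mean_frob_norm_signed_data_le:
  fixes x :: "nat \<Rightarrow> nat \<Rightarrow> real" and n :: nat
  assumes "\<And>i. i < n \<Longrightarrow> vec_norm m (x i) \<le> 1"
  shows "sign_mean ({..<n} \<times> {..<k}) (\<lambda>\<epsilon>. frob_norm k m (\<lambda>j l. \<Sum>i<n. \<epsilon> (i, j) * x i l))
    \<le> sqrt (real k * real n)"
proof -
  let ?I = "{..<n} \<times> {..<k}"
  have "sign_mean ?I (\<lambda>\<epsilon>. (frob_norm k m (\<lambda>j l. \<Sum>i<n. \<epsilon> (i, j) * x i l))\<^sup>2)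
      = (\<Sum>j<k. \<Sum>l<m. sign_mean ?I (\<lambda>\<epsilon>. (\<Sum>i<n. \<epsilon> (i, j) * x i l)\<^sup>2))"
    unfolding frob_norm_def by (simp add: sum_nonneg sign_mean_sum)
  also have "\<dots> = real k * (\<Sum>i<n. \<Sum>l<m. (x i l)\<^sup>2)"
    by (simp add: sign_mean_signed_data_square sum.swap[of _ "{..<m}"])
  also have "\<dots> \<le> real k * real n"
  proof -
    have "(\<Sum>l<m. (x i l)\<^sup>2) \<le> 1" if "i < n" for i
      using assms[OF that] unfolding vec_norm_def by simp
    then have "(\<Sum>i<n. \<Sum>l<m. (x i l)\<^sup>2) \<le> real n"
      using sum_mono[of "{..<n}" "\<lambda>i. \<Sum>l<m. (x i l)\<^sup>2" "\<lambda>_. 1"] by simp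
    then show ?thesis by (simp add: mult_left_mono)
  qed
  finally have "sqrt (sign_mean ?I (\<lambda>\<epsilon>. (frob_norm k m (\<lambda>j l. \<Sum>i<n. \<epsilon> (i, j) * x i l))\<^sup>2))
      \<le> sqrt (real k * real n)"
    by (rule real_sqrt_le_mono)
  with sign_mean_le_sqrt_mean_square show ?thesis by (rule order_trans) simp
qed

text \<open>Centering at \<open>W0\<close>: the signed sum is linear in \<open>W\<close>, its \<open>W0\<close>-part has mean zero,
  and the rest is controlled by Cauchy-Schwarz since \<open>W - W0\<close> has Frobenius norm at most one.\<close>

theorem rademacher_linear_class_le:
  assumes T: "T \<subseteq> hyp_set k m W0" "T \<noteq> {}" and c: "0 \<le> c"
    and x: "\<And>i. i < n \<Longrightarrow> vec_norm m (x i) \<le> 1"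
  shows "sign_mean ({..<n} \<times> {..<k})
      (\<lambda>\<epsilon>. SUP W\<in>T. c * (\<Sum>i<n. \<Sum>j<k. \<epsilon> (i, j) * mat_vec k m W (x i) j))
    \<le> c * sqrt (real k * real n)"
proof -
  let ?I = "{..<n} \<times> {..<k}"
  define M where "M \<epsilon> j l = (\<Sum>i<n. \<epsilon> (i, j) * x i l)" for \<epsilon> :: "nat \<times> nat \<Rightarrow> real" and j l
  define P where "P \<epsilon> = (\<Sum>j<k. \<Sum>l<m. W0 j l * M \<epsilon> j l)" for \<epsilon>
  have centered: "(\<Sum>j<k. \<Sum>l<m. W j l * M \<epsilon> j l) \<le> P \<epsilon> + frob_norm k m (M \<epsilon>)"
    if "W \<in> T" for W \<epsilon>
  proof -
    have "(\<Sum>j<k. \<Sum>l<m. W j l * M \<epsilon> j l)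
        = P \<epsilon> + (\<Sum>j<k. \<Sum>l<m. (W j l - W0 j l) * M \<epsilon> j l)"
      unfolding P_def by (simp add: sum.distrib[symmetric] algebra_simps)
    also have "\<dots> \<le> P \<epsilon> + frob_dist k m W W0 * frob_norm k m (M \<epsilon>)"
      unfolding frob_dist_eq_frob_norm by (intro add_left_mono frob_inner_le)
    also have "\<dots> \<le> P \<epsilon> + frob_norm k m (M \<epsilon>)"
      using that T(1) frob_norm_nonneg[of k m "M \<epsilon>"]
      by (intro add_left_mono mult_left_le_one_le)
        (auto simp: hyp_set_def frob_dist_eq_frob_norm frob_norm_nonneg)
    finally show ?thesis .
  qed
  have "sign_mean ?I (\<lambda>\<epsilon>. SUP W\<in>T. c * (\<Sum>i<n. \<Sum>j<k. \<epsilon> (i, j) * mat_vec k m W (x i) j))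
      \<le> sign_mean ?I (\<lambda>\<epsilon>. c * (P \<epsilon> + frob_norm k m (M \<epsilon>)))"
  proof (intro sign_mean_mono cSUP_least T(2))
    fix \<epsilon> W assume "W \<in> T"
    then show "c * (\<Sum>i<n. \<Sum>j<k. \<epsilon> (i, j) * mat_vec k m W (x i) j)
        \<le> c * (P \<epsilon> + frob_norm k m (M \<epsilon>))"
      using centered[of W \<epsilon>] c unfolding signed_sum_mat_vec_eq M_def by (intro mult_left_mono)
  qed
  also have "\<dots> = c * sign_mean ?I (\<lambda>\<epsilon>. frob_norm k m (M \<epsilon>))"
  proof -
    have "sign_mean ?I P = 0"
      unfolding P_def M_def
      by (simp add: sum_distrib_left sign_mean_sum sign_mean_cmult sign_mean_cmult_right
          sign_mean_coordinate)
    then show ?thesis by (simp add: sign_mean_add sign_mean_cmult distrib_left)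
  qed
  also have "\<dots> \<le> c * sqrt (real k * real n)"
    unfolding M_def using sign_mean_frob_norm_signed_data_le[OF x] c by (intro mult_left_mono)
  finally show ?thesis .
qed

theorem rademacher_loss_class_le:
  fixes x :: "nat \<Rightarrow> nat \<Rightarrow> real"
  assumes lip: "lipschitz_loss k G l" and G: "0 \<le> G"
    and T: "T \<subseteq> hyp_set k m W0" "T \<noteq> {}"
    and x: "\<And>i. i < n \<Longrightarrow> vec_norm m (x i) \<le> 1"
  shows "sign_mean {..<n} (\<lambda>\<sigma>. SUP W\<in>T. \<Sum>i<n. \<sigma> i * l (mat_vec k m W (x i)))
    \<le> sqrt 3 * G * sqrt (real k * real n)"
proof -
  define B where "B = \<bar>l (\<lambda>_. 0)\<bar> + (G + 1) * (frob_norm k m W0 + 1)"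
  have norm_W0: "0 \<le> frob_norm k m W0 + 1" using frob_norm_nonneg[of k m W0] by simp
  have "sign_mean {..<n} (\<lambda>\<sigma>. SUP W\<in>T. 0 + (\<Sum>i<n. \<sigma> i * l (mat_vec k m W (x i))))
    \<le> sign_mean ({..<n} \<times> {..<k})
        (\<lambda>\<epsilon>. SUP W\<in>T. 0 + sqrt 3 * G * (\<Sum>i<n. \<Sum>j<k. \<epsilon> (i, j) * mat_vec k m W (x i) j))"
  proof (rule vector_contraction[OF _ _ T(2) G, where B = B and BA = 0])
    fix i W assume "i \<in> {..<n}" "W \<in> T"
    then have W: "W \<in> hyp_set k m W0" and xi: "vec_norm m (x i) \<le> 1" using T(1) x by auto
    have "0 \<le> G * (frob_norm k m W0 + 1)" using G norm_W0 by simp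
    with norm_W0 have N: "G * (frob_norm k m W0 + 1) \<le> (G + 1) * (frob_norm k m W0 + 1)"
      "frob_norm k m W0 + 1 \<le> (G + 1) * (frob_norm k m W0 + 1)"
      by (simp_all add: distrib_right)
    show "\<bar>l (mat_vec k m W (x i))\<bar> \<le> B"
      using abs_loss_mat_vec_le_on_ball[OF lip G W xi] N unfolding B_def by linarith
    show "\<bar>mat_vec k m W (x i) j\<bar> \<le> B" for j
      using abs_mat_vec_le_on_ball[OF W xi, of j] N unfolding B_def by linarith
  next
    fix i W W' assume "W \<in> T" "W' \<in> T"
    show "\<bar>l (mat_vec k m W (x i)) - l (mat_vec k m W' (x i))\<bar>
        \<le> G * sqrt (\<Sum>j<k. (mat_vec k m W (x i) j - mat_vec k m W' (x i) j)\<^sup>2)"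
      using lip by (intro lipschitz_lossD mat_vec_in_vec_space)
  qed simp_all
  also have "\<dots> \<le> sqrt 3 * G * sqrt (real k * real n)"
    unfolding add_0_left by (rule rademacher_linear_class_le[OF T _ x]) (use G in simp)
  finally show ?thesis by (simp only: add_0_left)
qed

section \<open>Measurability and a countable dense set of hypotheses\<close>

lemma lipschitz_loss_continuous_on:
  assumes lip: "lipschitz_loss k G l"
  shows "continuous_on (vec_space k) l"
  unfolding continuous_on_def
proof
  fix y0 assume y0: "y0 \<in> vec_space k"
  define g where "g y = G * sqrt (\<Sum>i<k. (y i - y0 i)\<^sup>2)" for y :: "nat \<Rightarrow> real"
  have "continuous_on (vec_space k) g"
    unfolding g_def
    by (intro continuous_intros continuous_on_subset[OF continuous_on_product_coordinates]) auto
  then have "(g \<longlongrightarrow> g y0) (at y0 within vec_space k)"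
    using y0 by (simp add: continuous_on_def)
  then have "(g \<longlongrightarrow> 0) (at y0 within vec_space k)"
    by (simp add: g_def)
  moreover have "\<forall>\<^sub>F y in at y0 within vec_space k. norm (l y - l y0) \<le> g y"
    unfolding eventually_at_filter g_def
    using lip y0 by (auto intro!: always_eventually lipschitz_lossD)
  ultimately have "((\<lambda>y. l y - l y0) \<longlongrightarrow> 0) (at y0 within vec_space k)"
    by (rule Lim_null_comparison[rotated])
  then show "(l \<longlongrightarrow> l y0) (at y0 within vec_space k)"
    by (rule LIM_zero_cancel)
qed

lemma measurable_loss_mat_vec:
  assumes lip: "lipschitz_loss k G l" and sets_D: "sets D = sets (PiM {..<m} (\<lambda>_. borel))"
  shows "(\<lambda>x. l (mat_vec k m W x)) \<in> borel_measurable D"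
proof -
  define P where "P y i = (if i < k then y i else 0)" for y :: "nat \<Rightarrow> real" and i
  have "continuous_on UNIV P"
    unfolding P_def
  proof (intro continuous_on_coordinatewise_then_product)
    show "continuous_on UNIV (\<lambda>y. if i < k then y i else 0)" for i :: nat
      by (cases "i < k") auto
  qed
  then have "continuous_on UNIV (\<lambda>y. l (P y))"
    by (rule continuous_on_compose2[OF lipschitz_loss_continuous_on[OF lip]])
      (auto simp: P_def vec_space_def)
  then have l_P: "(\<lambda>y. l (P y)) \<in> borel_measurable borel"
    by (rule borel_measurable_continuous_onI)
  have "mat_vec k m W \<in> measurable (PiM {..<m} (\<lambda>_. borel)) (PiM UNIV (\<lambda>_. borel :: real measure))"
    by (rule measurable_PiM_single') (auto simp: mat_vec_def)
  moreover have "measurable D borel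
      = measurable (PiM {..<m} (\<lambda>_. borel)) (PiM UNIV (\<lambda>_::nat. borel :: real measure))"
    by (rule measurable_cong_sets[OF sets_D sets_PiM_equal_borel[symmetric]])
  ultimately have "mat_vec k m W \<in> measurable D borel" by simp
  with l_P have "(\<lambda>x. l (P (mat_vec k m W x))) \<in> borel_measurable D" by measurable
  moreover have "P (mat_vec k m W x) = mat_vec k m W x" for x
    unfolding P_def mat_vec_def by auto
  ultimately show ?thesis by simp
qed

definition rational_hyp_set :: "nat \<Rightarrow> nat \<Rightarrow> (nat \<Rightarrow> nat \<Rightarrow> real) \<Rightarrow> (nat \<Rightarrow> nat \<Rightarrow> real) set" where
  "rational_hyp_set k m W0 = {W \<in> hyp_set k m W0. \<forall>i j. W i j - W0 i j \<in> \<rat>}"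

lemma rational_hyp_set_subset: "rational_hyp_set k m W0 \<subseteq> hyp_set k m W0"
  unfolding rational_hyp_set_def by auto

lemma center_in_rational_hyp_set: "is_matrix k m W0 \<Longrightarrow> W0 \<in> rational_hyp_set k m W0"
  unfolding rational_hyp_set_def hyp_set_def frob_dist_def by auto

lemma countable_rational_hyp_set: "countable (rational_hyp_set k m W0)"
proof -
  define g where "g W = restrict (\<lambda>p. W (fst p) (snd p) - W0 (fst p) (snd p)) ({..<k} \<times> {..<m})"
    for W
  have "g ` rational_hyp_set k m W0 \<subseteq> ({..<k} \<times> {..<m}) \<rightarrow>\<^sub>E \<rat>"
    unfolding g_def rational_hyp_set_def by (intro image_subsetI) (auto simp: restrict_PiE_iff)
  moreover have "countable (({..<k} \<times> {..<m}) \<rightarrow>\<^sub>E \<rat>)"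
    by (intro countable_PiE countable_rat) auto
  ultimately have "countable (g ` rational_hyp_set k m W0)" by (rule countable_subset)
  moreover have "inj_on g (rational_hyp_set k m W0)"
  proof (rule inj_onI)
    fix W V assume W: "W \<in> rational_hyp_set k m W0" and V: "V \<in> rational_hyp_set k m W0"
      and eq: "g W = g V"
    show "W = V"
    proof (intro ext)
      fix i j
      show "W i j = V i j"
      proof (cases "i < k \<and> j < m")
        case True
        then show ?thesis using fun_cong[OF eq, of "(i, j)"] unfolding g_def by simp
      next
        case False
        then show ?thesis using W V unfolding rational_hyp_set_def hyp_set_def is_matrix_def by auto
      qed
    qed
  qed
  ultimately show ?thesis by (rule countable_image_inj_on)
qed

lemma frob_norm_le_of_abs_le:
  assumes "0 \<le> \<eta>" "\<And>i j. i < k \<Longrightarrow> j < m \<Longrightarrow> \<bar>A i j\<bar> \<le> \<eta>"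
  shows "frob_norm k m A \<le> sqrt (real k * real m) * \<eta>"
  unfolding frob_norm_def
proof (rule real_le_lsqrt)
  have "(\<Sum>i<k. \<Sum>j<m. (A i j)\<^sup>2) \<le> (\<Sum>i<k. \<Sum>j<m. \<eta>\<^sup>2)"
    using assms by (intro sum_mono) (metis abs_le_square_iff abs_of_nonneg lessThan_iff)
  also have "\<dots> = (sqrt (real k * real m) * \<eta>)\<^sup>2"
    by (simp add: power_mult_distrib)
  finally show "(\<Sum>i<k. \<Sum>j<m. (A i j)\<^sup>2) \<le> (sqrt (real k * real m) * \<eta>)\<^sup>2" .
qed (use assms(1) in auto)

lemma exists_rational_matrix_near:
  assumes "0 < \<eta>"
  shows "\<exists>R. is_matrix k m R \<and> (\<forall>i j. R i j \<in> \<rat>) \<and> frob_norm k m (\<lambda>i j. R i j - A i j) \<le> \<eta>"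
proof -
  define s where "s = sqrt (real k * real m)"
  define \<epsilon> where "\<epsilon> = \<eta> / (s + 1)"
  have s: "0 \<le> s" unfolding s_def by simp
  have \<epsilon>: "0 < \<epsilon>" unfolding \<epsilon>_def using assms s by simp
  have "\<exists>q\<in>\<rat>. \<bar>q - A i j\<bar> < \<epsilon>" for i j
  proof -
    obtain q where "q \<in> \<rat>" "A i j - \<epsilon> < q" "q < A i j + \<epsilon>"
      using Rats_dense_in_real[of "A i j - \<epsilon>" "A i j + \<epsilon>"] \<epsilon> by auto
    then show ?thesis by (intro bexI[of _ q]) (auto simp: abs_less_iff)
  qed
  then obtain r where r: "\<And>i j. r i j \<in> \<rat>" "\<And>i j. \<bar>r i j - A i j\<bar> < \<epsilon>" by metis
  define R where "R i j = (if i < k \<and> j < m then r i j else 0)" for i j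
  have "frob_norm k m (\<lambda>i j. R i j - A i j) \<le> s * \<epsilon>"
    unfolding s_def using \<epsilon> r(2) by (intro frob_norm_le_of_abs_le) (auto simp: R_def less_imp_le)
  also have "\<dots> \<le> \<eta>"
    unfolding \<epsilon>_def using assms s by (simp add: field_simps)
  finally show ?thesis
    using r(1) by (intro exI[of _ R]) (auto simp: R_def is_matrix_def)
qed

text \<open>Shrinking \<open>V - W0\<close> by the factor \<open>1 - t\<close> before rounding keeps the rounded matrix
  inside the closed unit ball around \<open>W0\<close>.\<close>

lemma rational_hyp_set_dense:
  assumes W0: "is_matrix k m W0" and V: "V \<in> hyp_set k m W0" and \<delta>: "0 < \<delta>"
  shows "\<exists>W\<in>rational_hyp_set k m W0. frob_dist k m W V \<le> \<delta>"
proof -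
  define t where "t = min (\<delta> / 2) (1 / 2)"
  have t: "0 < t" "t \<le> \<delta> / 2" "t \<le> 1 / 2" unfolding t_def using \<delta> by auto
  define D where "D i j = V i j - W0 i j" for i j
  have D: "frob_norm k m D \<le> 1"
    using V unfolding hyp_set_def frob_dist_eq_frob_norm D_def by simp
  obtain R where R: "is_matrix k m R" "\<And>i j. R i j \<in> \<rat>"
    and near: "frob_norm k m (\<lambda>i j. R i j - (1 - t) * D i j) \<le> t"
    using exists_rational_matrix_near[OF t(1), where A = "\<lambda>i j. (1 - t) * D i j"] by blast
  have "frob_norm k m R
      \<le> frob_norm k m (\<lambda>i j. (1 - t) * D i j) + frob_norm k m (\<lambda>i j. R i j - (1 - t) * D i j)"
    using frob_norm_triangle[of k m "\<lambda>i j. (1 - t) * D i j" "\<lambda>i j. R i j - (1 - t) * D i j"]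
    by simp
  also have "\<dots> \<le> (1 - t) * 1 + t"
    unfolding frob_norm_scale using D near t by (intro add_mono mult_left_mono) auto
  finally have R_norm: "frob_norm k m R \<le> 1" by simp
  define W where "W i j = W0 i j + R i j" for i j
  have "W \<in> rational_hyp_set k m W0"
    using W0 R R_norm
    unfolding rational_hyp_set_def hyp_set_def is_matrix_def frob_dist_eq_frob_norm W_def by auto
  moreover have "frob_dist k m W V \<le> \<delta>"
  proof -
    have "frob_dist k m W V = frob_norm k m (\<lambda>i j. (R i j - (1 - t) * D i j) + (- t) * D i j)"
      unfolding frob_dist_eq_frob_norm W_def D_def by (simp add: algebra_simps)
    also have "\<dots>
        \<le> frob_norm k m (\<lambda>i j. R i j - (1 - t) * D i j) + frob_norm k m (\<lambda>i j. (- t) * D i j)"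
      by (rule frob_norm_triangle)
    also have "\<dots> \<le> t + t * 1"
      unfolding frob_norm_scale using near D t(1) by (intro add_mono mult_left_mono) auto
    finally show ?thesis using t by simp
  qed
  ultimately show ?thesis by blast
qed

lemma rational_hyp_set_pointwise_dense:
  assumes lip: "lipschitz_loss k G l" and G: "0 \<le> G" and W0: "is_matrix k m W0"
    and V: "V \<in> hyp_set k m W0" and X: "finite X" and \<epsilon>: "0 < \<epsilon>"
  shows "\<exists>W\<in>rational_hyp_set k m W0. \<forall>x\<in>X. \<bar>l (mat_vec k m V x) - l (mat_vec k m W x)\<bar> \<le> \<epsilon>"
proof -
  define N where "N = G * (\<Sum>x\<in>X. vec_norm m x)"
  have N: "0 \<le> N" unfolding N_def using G by (simp add: sum_nonneg vec_norm_nonneg)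
  obtain W where W: "W \<in> rational_hyp_set k m W0" and near: "frob_dist k m W V \<le> \<epsilon> / (N + 1)"
    using rational_hyp_set_dense[OF W0 V, of "\<epsilon> / (N + 1)"] \<epsilon> N by auto
  have "\<bar>l (mat_vec k m V x) - l (mat_vec k m W x)\<bar> \<le> \<epsilon>" if x: "x \<in> X" for x
  proof -
    have "\<bar>l (mat_vec k m V x) - l (mat_vec k m W x)\<bar> \<le> G * (frob_dist k m W V * vec_norm m x)"
      using loss_mat_vec_lipschitz[OF lip G, of m W x V] by (simp add: abs_minus_commute)
    also have "\<dots> \<le> G * (\<epsilon> / (N + 1) * (\<Sum>x\<in>X. vec_norm m x))"
    proof (intro mult_left_mono mult_mono near G)
      show "vec_norm m x \<le> (\<Sum>x\<in>X. vec_norm m x)"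
        using X x by (intro member_le_sum) (auto simp: vec_norm_nonneg)
    qed (use \<epsilon> N vec_norm_nonneg in auto)
    also have "\<dots> \<le> \<epsilon>"
      using \<epsilon> N unfolding N_def by (simp add: field_simps)
    finally show ?thesis .
  qed
  with W show ?thesis by blast
qed

section \<open>Symmetrization with a ghost sample\<close>

text \<open>The sample \<open>\<omega> 0, \<dots>, \<omega> (n - 1)\<close> is completed by an independent ghost sample
  \<open>\<omega> n, \<dots>, \<omega> (2 n - 1)\<close>. The supremum over the class is taken over a countable subclass \<open>T\<close>
  that is pointwise dense in \<open>H\<close>, which makes it measurable without changing its value.
  The envelope \<open>env\<close> only serves to make the suprema finite everywhere, the bound \<open>c\<close> makes
  them integrable.\<close>

locale ghost_sample =
  fixes D :: "'x measure" and F :: "'w \<Rightarrow> 'x \<Rightarrow> real" and H T :: "'w set"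
    and B :: "'x set" and env :: "'x \<Rightarrow> real" and c :: real and n :: nat
  assumes prob_space_D: "prob_space D"
    and F_measurable: "\<And>w. w \<in> H \<Longrightarrow> F w \<in> borel_measurable D"
    and F_envelope: "\<And>w x. w \<in> H \<Longrightarrow> \<bar>F w x\<bar> \<le> env x"
    and F_bounded: "\<And>w x. w \<in> H \<Longrightarrow> x \<in> B \<Longrightarrow> \<bar>F w x\<bar> \<le> c"
    and AE_in_B: "AE x in D. x \<in> B"
    and T_subset: "T \<subseteq> H" and countable_T: "countable T" and T_nonempty: "T \<noteq> {}"
    and T_dense: "\<And>V X \<epsilon>. V \<in> H \<Longrightarrow> finite X \<Longrightarrow> 0 < \<epsilon> \<Longrightarrow>
      \<exists>W\<in>T. \<forall>x\<in>X. \<bar>F V x - F W x\<bar> \<le> \<epsilon>"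
begin

abbreviation "PM I \<equiv> PiM I (\<lambda>_. D)"
abbreviation "sample \<equiv> {..<n}"
abbreviation "ghost \<equiv> {n..<2 * n}"
abbreviation "both \<equiv> sample \<union> ghost"

lemma prob_space_PM: "prob_space (PM I)"
  by (intro prob_space_PiM prob_space_D)

lemma F_integrable: "w \<in> H \<Longrightarrow> integrable D (F w)"
proof -
  assume w: "w \<in> H"
  interpret prob_space D by (rule prob_space_D)
  show ?thesis
    by (rule integrable_const_bound[where B = c])
      (use AE_in_B F_bounded[OF w] F_measurable[OF w] in \<open>auto elim!: eventually_mono\<close>)
qed

lemma measurable_F_component:
  assumes "w \<in> H" "i \<in> I"
  shows "(\<lambda>\<omega>. F w (\<omega> i)) \<in> borel_measurable (PM I)"
  using measurable_component_singleton[OF assms(2)] F_measurable[OF assms(1)]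
  by (rule measurable_compose)

lemma distr_PM_component: "i \<in> I \<Longrightarrow> distr (PM I) D (\<lambda>\<omega>. \<omega> i) = D"
  by (rule distr_PiM_component) (auto intro: prob_space_D)

lemma integrable_F_component:
  assumes "w \<in> H" "i \<in> I"
  shows "integrable (PM I) (\<lambda>\<omega>. F w (\<omega> i))"
proof -
  have "integrable (distr (PM I) D (\<lambda>\<omega>. \<omega> i)) (F w) = integrable (PM I) (\<lambda>\<omega>. F w (\<omega> i))"
    using assms by (intro integrable_distr_eq F_measurable measurable_component_singleton)
  then show ?thesis using F_integrable[OF assms(1)] distr_PM_component[OF assms(2)] by simp
qed

lemma integral_F_component:
  assumes "w \<in> H" "i \<in> I"
  shows "(\<integral>\<omega>. F w (\<omega> i) \<partial>PM I) = (\<integral>x. F w x \<partial>D)"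
proof -
  have "integral\<^sup>L (distr (PM I) D (\<lambda>\<omega>. \<omega> i)) (F w) = (\<integral>\<omega>. F w (\<omega> i) \<partial>PM I)"
    using assms by (intro integral_distr F_measurable measurable_component_singleton)
  then show ?thesis using distr_PM_component[OF assms(2)] by simp
qed

lemma AE_PM_in_B: "finite I \<Longrightarrow> AE \<omega> in PM I. \<forall>i\<in>I. \<omega> i \<in> B"
  by (intro eventually_ball_finite ballI AE_PiM_component prob_space_D AE_in_B)

definition ghost_gap :: "'w \<Rightarrow> (nat \<Rightarrow> 'x) \<Rightarrow> real" where
  "ghost_gap w \<omega> = (\<Sum>i<n. F w (\<omega> (i + n)) - F w (\<omega> i))"

definition sup_ghost_gap :: "(nat \<Rightarrow> 'x) \<Rightarrow> real" where
  "sup_ghost_gap \<omega> = (SUP w\<in>T. ghost_gap w \<omega>)"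

lemma abs_ghost_gap_le:
  assumes w: "w \<in> H"
  shows "\<bar>ghost_gap w \<omega>\<bar> \<le> (\<Sum>i<n. env (\<omega> (i + n)) + env (\<omega> i))"
proof -
  have "\<bar>F w a - F w b\<bar> \<le> env a + env b" for a b
    using abs_triangle_ineq4[of "F w a" "F w b"] F_envelope[OF w, of a] F_envelope[OF w, of b]
    by linarith
  then show ?thesis
    unfolding ghost_gap_def by (intro order_trans[OF sum_abs] sum_mono)
qed

lemma bdd_above_ghost_gap: "bdd_above ((\<lambda>w. ghost_gap w \<omega>) ` T)"
proof (rule bdd_aboveI2)
  fix w assume "w \<in> T"
  then have "\<bar>ghost_gap w \<omega>\<bar> \<le> (\<Sum>i<n. env (\<omega> (i + n)) + env (\<omega> i))"
    using T_subset by (intro abs_ghost_gap_le) auto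
  then show "ghost_gap w \<omega> \<le> (\<Sum>i<n. env (\<omega> (i + n)) + env (\<omega> i))" by simp
qed

lemma ghost_gap_le_sup:
  assumes V: "V \<in> H"
  shows "ghost_gap V \<omega> \<le> sup_ghost_gap \<omega>"
proof (rule field_le_epsilon)
  fix \<epsilon> :: real assume \<epsilon>: "0 < \<epsilon>"
  define X where "X = \<omega> ` {..<2 * n}"
  have "finite X" "0 < \<epsilon> / (2 * n + 1)" unfolding X_def using \<epsilon> by auto
  then obtain W where W: "W \<in> T"
    and near: "\<And>x. x \<in> X \<Longrightarrow> \<bar>F V x - F W x\<bar> \<le> \<epsilon> / (2 * n + 1)"
    using T_dense[OF V] by blast
  have "ghost_gap V \<omega> - ghost_gap W \<omega>
      = (\<Sum>i<n. (F V (\<omega> (i + n)) - F W (\<omega> (i + n))) - (F V (\<omega> i) - F W (\<omega> i)))"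
    unfolding ghost_gap_def by (simp add: sum_subtractf[symmetric] algebra_simps)
  also have "\<dots> \<le> (\<Sum>i<n. 2 * (\<epsilon> / (2 * n + 1)))"
  proof (intro sum_mono)
    fix i assume "i \<in> {..<n}"
    then have "\<omega> (i + n) \<in> X" "\<omega> i \<in> X" unfolding X_def by auto
    then have "\<bar>F V (\<omega> (i + n)) - F W (\<omega> (i + n))\<bar> \<le> \<epsilon> / (2 * n + 1)"
      "\<bar>F V (\<omega> i) - F W (\<omega> i)\<bar> \<le> \<epsilon> / (2 * n + 1)"
      by (blast intro: near)+
    then show "(F V (\<omega> (i + n)) - F W (\<omega> (i + n))) - (F V (\<omega> i) - F W (\<omega> i))
        \<le> 2 * (\<epsilon> / (2 * n + 1))"
      unfolding abs_le_iff by linarith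
  qed
  also have "\<dots> \<le> \<epsilon>"
    using \<epsilon> by (simp add: field_simps)
  finally have "ghost_gap V \<omega> \<le> ghost_gap W \<omega> + \<epsilon>" by simp
  also have "ghost_gap W \<omega> \<le> sup_ghost_gap \<omega>"
    unfolding sup_ghost_gap_def by (rule cSUP_upper[OF W bdd_above_ghost_gap])
  finally show "ghost_gap V \<omega> \<le> sup_ghost_gap \<omega> + \<epsilon>" by simp
qed

lemma measurable_ghost_gap: "w \<in> H \<Longrightarrow> ghost_gap w \<in> borel_measurable (PM both)"
  unfolding ghost_gap_def
  by (intro borel_measurable_sum borel_measurable_diff measurable_F_component) auto

lemma measurable_sup_ghost_gap: "sup_ghost_gap \<in> borel_measurable (PM both)"
  unfolding sup_ghost_gap_def using T_subset
  by (intro borel_measurable_cSUP countable_T bdd_above_ghost_gap measurable_ghost_gap) auto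

lemma abs_sup_ghost_gap_le:
  assumes "\<And>j. j \<in> both \<Longrightarrow> \<omega> j \<in> B"
  shows "\<bar>sup_ghost_gap \<omega>\<bar> \<le> 2 * n * c"
proof -
  have gap: "\<bar>ghost_gap w \<omega>\<bar> \<le> 2 * n * c" if "w \<in> H" for w
  proof -
    have "\<bar>ghost_gap w \<omega>\<bar> \<le> (\<Sum>i<n. \<bar>F w (\<omega> (i + n))\<bar> + \<bar>F w (\<omega> i)\<bar>)"
      unfolding ghost_gap_def by (intro order_trans[OF sum_abs] sum_mono) simp
    also have "\<dots> \<le> (\<Sum>i<n. c + c)"
      using F_bounded[OF that] assms by (intro sum_mono add_mono) auto
    finally show ?thesis by simp
  qed
  obtain w where w: "w \<in> T" using T_nonempty by blast
  have "ghost_gap w \<omega> \<le> sup_ghost_gap \<omega>"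
    unfolding sup_ghost_gap_def by (rule cSUP_upper[OF w bdd_above_ghost_gap])
  moreover have "sup_ghost_gap \<omega> \<le> 2 * n * c"
    unfolding sup_ghost_gap_def using gap T_subset
    by (intro cSUP_least T_nonempty) (auto simp: abs_le_iff)
  ultimately show ?thesis using gap[of w] w T_subset by auto
qed

lemma integrable_sup_ghost_gap: "integrable (PM both) sup_ghost_gap"
proof -
  interpret prob_space "PM both" by (rule prob_space_PM)
  show ?thesis
    by (rule integrable_const_bound[where B = "2 * n * c"])
      (use AE_PM_in_B[of both] abs_sup_ghost_gap_le measurable_sup_ghost_gap
        in \<open>auto elim!: eventually_mono\<close>)
qed

text \<open>Exchanging \<open>\<omega> i\<close> with \<open>\<omega> (i + n)\<close> for every \<open>i\<close> with \<open>\<sigma> i = -1\<close> preserves the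
  product measure and multiplies the \<open>i\<close>-th term of the ghost gap by \<open>\<sigma> i\<close>.\<close>

definition swap_index :: "(nat \<Rightarrow> real) \<Rightarrow> nat \<Rightarrow> nat" where
  "swap_index \<sigma> j =
    (if j < n then (if \<sigma> j = 1 then j else j + n) else (if \<sigma> (j - n) = 1 then j else j - n))"

definition swap_sample :: "(nat \<Rightarrow> real) \<Rightarrow> (nat \<Rightarrow> 'x) \<Rightarrow> nat \<Rightarrow> 'x" where
  "swap_sample \<sigma> \<omega> = (\<lambda>j\<in>both. \<omega> (swap_index \<sigma> j))"

lemma distr_swap_sample: "distr (PM both) (PM both) (swap_sample \<sigma>) = PM both"
proof -
  have "inj_on (swap_index \<sigma>) both" "swap_index \<sigma> \<in> both \<rightarrow> both"
    unfolding inj_on_def swap_index_def by (auto split: if_splits)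
  then show ?thesis
    unfolding swap_sample_def
    using distr_PiM_reindex[of both "\<lambda>_. D" "swap_index \<sigma>" both] prob_space_D
    by simp
qed

lemma measurable_swap_sample: "swap_sample \<sigma> \<in> measurable (PM both) (PM both)"
  unfolding swap_sample_def
proof (rule measurable_restrict)
  fix j assume "j \<in> both"
  then have "swap_index \<sigma> j \<in> both" unfolding swap_index_def by auto
  then show "(\<lambda>\<omega>. \<omega> (swap_index \<sigma> j)) \<in> measurable (PM both) D"
    by (rule measurable_component_singleton)
qed

definition sup_signed_ghost_gap :: "(nat \<Rightarrow> real) \<Rightarrow> (nat \<Rightarrow> 'x) \<Rightarrow> real" where
  "sup_signed_ghost_gap \<sigma> \<omega> = (SUP w\<in>T. \<Sum>i<n. \<sigma> i * (F w (\<omega> (i + n)) - F w (\<omega> i)))"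

lemma sup_ghost_gap_swap_sample:
  assumes \<sigma>: "\<sigma> \<in> sign_vectors sample"
  shows "sup_ghost_gap (swap_sample \<sigma> \<omega>) = sup_signed_ghost_gap \<sigma> \<omega>"
  unfolding sup_ghost_gap_def sup_signed_ghost_gap_def
proof (intro SUP_cong refl)
  fix w
  show "ghost_gap w (swap_sample \<sigma> \<omega>) = (\<Sum>i<n. \<sigma> i * (F w (\<omega> (i + n)) - F w (\<omega> i)))"
    unfolding ghost_gap_def
  proof (intro sum.cong refl)
    fix i assume i: "i \<in> sample"
    then have "\<sigma> i = -1 \<or> \<sigma> i = 1" using sign_vectors_value[OF \<sigma>] by blast
    then show "F w (swap_sample \<sigma> \<omega> (i + n)) - F w (swap_sample \<sigma> \<omega> i)
        = \<sigma> i * (F w (\<omega> (i + n)) - F w (\<omega> i))"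
      using i unfolding swap_sample_def swap_index_def by auto
  qed
qed

lemma integral_sup_signed_ghost_gap:
  assumes \<sigma>: "\<sigma> \<in> sign_vectors sample"
  shows "integrable (PM both) (sup_signed_ghost_gap \<sigma>)"
    and "integral\<^sup>L (PM both) (sup_signed_ghost_gap \<sigma>) = integral\<^sup>L (PM both) sup_ghost_gap"
proof -
  have "integrable (PM both) (\<lambda>\<omega>. sup_ghost_gap (swap_sample \<sigma> \<omega>))"
    using integrable_distr_eq[OF measurable_swap_sample measurable_sup_ghost_gap]
      integrable_sup_ghost_gap distr_swap_sample by simp
  then show "integrable (PM both) (sup_signed_ghost_gap \<sigma>)"
    using sup_ghost_gap_swap_sample[OF \<sigma>] by simp
  show "integral\<^sup>L (PM both) (sup_signed_ghost_gap \<sigma>) = integral\<^sup>L (PM both) sup_ghost_gap"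
    using integral_distr[OF measurable_swap_sample measurable_sup_ghost_gap, of \<sigma>]
      distr_swap_sample sup_ghost_gap_swap_sample[OF \<sigma>] by simp
qed

lemma bdd_above_signed_sum:
  "bdd_above ((\<lambda>w. \<Sum>i<n. s i * F w (x i)) ` T)"
proof (rule bdd_aboveI2)
  fix w assume "w \<in> T"
  then have "\<bar>F w (x i)\<bar> \<le> env (x i)" for i
    using T_subset F_envelope by blast
  then have "s i * F w (x i) \<le> \<bar>s i\<bar> * env (x i)" for i
    by (metis abs_ge_self abs_mult mult_left_mono abs_ge_zero order_trans)
  then show "(\<Sum>i<n. s i * F w (x i)) \<le> (\<Sum>i<n. \<bar>s i\<bar> * env (x i))"
    by (intro sum_mono)
qed

lemma sign_mean_sup_signed_ghost_gap_le:
  assumes R: "\<And>x. (\<And>i. i < n \<Longrightarrow> x i \<in> B) \<Longrightarrow>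
      sign_mean sample (\<lambda>\<sigma>. SUP w\<in>T. \<Sum>i<n. \<sigma> i * F w (x i)) \<le> R"
    and \<omega>: "\<And>j. j \<in> both \<Longrightarrow> \<omega> j \<in> B"
  shows "sign_mean sample (\<lambda>\<sigma>. sup_signed_ghost_gap \<sigma> \<omega>) \<le> 2 * R"
proof -
  define rad where "rad x \<sigma> = (SUP w\<in>T. \<Sum>i<n. \<sigma> i * F w (x i))" for x \<sigma>
  define \<omega>' where "\<omega>' i = \<omega> (i + n)" for i
  have "sup_signed_ghost_gap \<sigma> \<omega> \<le> rad \<omega>' \<sigma> + rad \<omega> (\<lambda>i\<in>sample. - \<sigma> i)" for \<sigma>
    unfolding sup_signed_ghost_gap_def
  proof (rule cSUP_least[OF T_nonempty])
    fix w assume w: "w \<in> T"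
    have "(\<Sum>i<n. \<sigma> i * (F w (\<omega> (i + n)) - F w (\<omega> i)))
        = (\<Sum>i<n. \<sigma> i * F w (\<omega>' i)) + (\<Sum>i<n. (\<lambda>i\<in>sample. - \<sigma> i) i * F w (\<omega> i))"
      unfolding \<omega>'_def by (simp add: sum.distrib[symmetric] algebra_simps)
    also have "\<dots> \<le> rad \<omega>' \<sigma> + rad \<omega> (\<lambda>i\<in>sample. - \<sigma> i)"
      unfolding rad_def by (intro add_mono cSUP_upper[OF w] bdd_above_signed_sum)
    finally show "(\<Sum>i<n. \<sigma> i * (F w (\<omega> (i + n)) - F w (\<omega> i)))
        \<le> rad \<omega>' \<sigma> + rad \<omega> (\<lambda>i\<in>sample. - \<sigma> i)" .
  qed
  then have "sign_mean sample (\<lambda>\<sigma>. sup_signed_ghost_gap \<sigma> \<omega>)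
      \<le> sign_mean sample (\<lambda>\<sigma>. rad \<omega>' \<sigma> + rad \<omega> (\<lambda>i\<in>sample. - \<sigma> i))"
    by (intro sign_mean_mono)
  also have "\<dots> = sign_mean sample (rad \<omega>') + sign_mean sample (rad \<omega>)"
    by (simp add: sign_mean_add sign_mean_flip)
  also have "\<dots> \<le> R + R"
    unfolding rad_def \<omega>'_def using \<omega> by (intro add_mono R) auto
  finally show ?thesis by simp
qed

text \<open>Symmetrization: by the swap invariance, averaging the swapped copies of the integrand
  over all sign vectors does not change the integral.\<close>

lemma integral_sup_ghost_gap_le:
  assumes R: "\<And>x. (\<And>i. i < n \<Longrightarrow> x i \<in> B) \<Longrightarrow>
      sign_mean sample (\<lambda>\<sigma>. SUP w\<in>T. \<Sum>i<n. \<sigma> i * F w (x i)) \<le> R"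
  shows "integral\<^sup>L (PM both) sup_ghost_gap \<le> 2 * R"
proof -
  interpret P: prob_space "PM both" by (rule prob_space_PM)
  have "integral\<^sup>L (PM both) sup_ghost_gap
      = sign_mean sample (\<lambda>\<sigma>. integral\<^sup>L (PM both) sup_ghost_gap)"
    by simp
  also have "\<dots> = sign_mean sample (\<lambda>\<sigma>. integral\<^sup>L (PM both) (sup_signed_ghost_gap \<sigma>))"
    by (intro sign_mean_cong) (simp add: integral_sup_signed_ghost_gap)
  also have "\<dots> = (\<integral>\<omega>. sign_mean sample (\<lambda>\<sigma>. sup_signed_ghost_gap \<sigma> \<omega>) \<partial>PM both)"
    unfolding sign_mean_def by (simp add: integral_sup_signed_ghost_gap)
  also have "\<dots> \<le> (\<integral>\<omega>. 2 * R \<partial>PM both)"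
  proof (rule integral_mono_AE)
    show "integrable (PM both) (\<lambda>\<omega>. sign_mean sample (\<lambda>\<sigma>. sup_signed_ghost_gap \<sigma> \<omega>))"
      unfolding sign_mean_def
      by (intro integrable_divide_zero Bochner_Integration.integrable_sum
          integral_sup_signed_ghost_gap)
    show "AE \<omega> in PM both. sign_mean sample (\<lambda>\<sigma>. sup_signed_ghost_gap \<sigma> \<omega>) \<le> 2 * R"
      using AE_PM_in_B[of both]
      by (auto elim!: eventually_mono intro: sign_mean_sup_signed_ghost_gap_le[OF R])
  qed simp
  also have "\<dots> = 2 * R" by (simp add: P.prob_space)
  finally show ?thesis .
qed

lemma integral_sum_components:
  assumes "V \<in> H" "\<And>i. i < n \<Longrightarrow> g i \<in> I"
  shows "integrable (PM I) (\<lambda>\<omega>. \<Sum>i<n. F V (\<omega> (g i)))"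
    and "(\<integral>\<omega>. (\<Sum>i<n. F V (\<omega> (g i))) \<partial>PM I) = n * (\<integral>x. F V x \<partial>D)"
proof -
  show "integrable (PM I) (\<lambda>\<omega>. \<Sum>i<n. F V (\<omega> (g i)))"
    using assms by (intro Bochner_Integration.integrable_sum integrable_F_component) auto
  show "(\<integral>\<omega>. (\<Sum>i<n. F V (\<omega> (g i))) \<partial>PM I) = n * (\<integral>x. F V x \<partial>D)"
    using assms
    by (simp add: Bochner_Integration.integral_sum integrable_F_component integral_F_component)
qed

text \<open>Conditionally on the sample \<open>S\<close>, the excess of the true over the empirical risk is the
  expectation over the ghost sample of the ghost gap.\<close>

lemma deviation_le_integral_sup_ghost_gap:
  assumes S: "S \<in> space (PM sample)" "\<And>i. i < n \<Longrightarrow> S i \<in> B" and V: "V \<in> H"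
  shows "n * (\<integral>x. F V x \<partial>D) - (\<Sum>i<n. F V (S i))
    \<le> (\<integral>y. sup_ghost_gap (merge sample ghost (S, y)) \<partial>PM ghost)"
proof -
  interpret P: prob_space "PM ghost" by (rule prob_space_PM)
  have merge: "(\<lambda>y. merge sample ghost (S, y)) \<in> measurable (PM ghost) (PM both)"
    using measurable_comp[OF measurable_Pair1'[OF S(1)] measurable_merge] by (simp add: comp_def)
  have gap: "ghost_gap V (merge sample ghost (S, y)) = (\<Sum>i<n. F V (y (i + n))) - (\<Sum>i<n. F V (S i))"
    for y
    unfolding ghost_gap_def by (simp add: sum_subtractf merge_def)
  have "n * (\<integral>x. F V x \<partial>D) - (\<Sum>i<n. F V (S i))
      = (\<integral>y. ghost_gap V (merge sample ghost (S, y)) \<partial>PM ghost)"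
    unfolding gap using integral_sum_components[OF V, of "\<lambda>i. i + n"] by (simp add: P.prob_space)
  also have "\<dots> \<le> (\<integral>y. sup_ghost_gap (merge sample ghost (S, y)) \<partial>PM ghost)"
  proof (rule integral_mono)
    show "integrable (PM ghost) (\<lambda>y. ghost_gap V (merge sample ghost (S, y)))"
      unfolding gap using integral_sum_components[OF V, of "\<lambda>i. i + n"] by simp
    show "integrable (PM ghost) (\<lambda>y. sup_ghost_gap (merge sample ghost (S, y)))"
    proof (rule P.integrable_const_bound[where B = "2 * n * c"])
      show "AE y in PM ghost. norm (sup_ghost_gap (merge sample ghost (S, y))) \<le> 2 * n * c"
        using AE_PM_in_B[OF finite_atLeastLessThan]
      proof eventually_elim
        case (elim y)
        then have "merge sample ghost (S, y) j \<in> B" if "j \<in> both" for j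
          using that S(2) by (auto simp: merge_def)
        then show ?case using abs_sup_ghost_gap_le by simp
      qed
      show "(\<lambda>y. sup_ghost_gap (merge sample ghost (S, y))) \<in> borel_measurable (PM ghost)"
        using measurable_comp[OF merge measurable_sup_ghost_gap] by (simp add: comp_def)
    qed
    show "ghost_gap V (merge sample ghost (S, y)) \<le> sup_ghost_gap (merge sample ghost (S, y))" for y
      by (rule ghost_gap_le_sup[OF V])
  qed
  finally show ?thesis .
qed

lemma integral_merge_sup_ghost_gap:
  shows "integrable (PM sample) (\<lambda>S. \<integral>y. sup_ghost_gap (merge sample ghost (S, y)) \<partial>PM ghost)"
    and "(\<integral>S. (\<integral>y. sup_ghost_gap (merge sample ghost (S, y)) \<partial>PM ghost) \<partial>PM sample)
      = integral\<^sup>L (PM both) sup_ghost_gap"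
proof -
  interpret product_sigma_finite "\<lambda>_. D"
    unfolding product_sigma_finite_def using prob_space_imp_sigma_finite[OF prob_space_D] by simp
  interpret pair_sigma_finite "PM sample" "PM ghost"
    unfolding pair_sigma_finite_def by (intro conjI prob_space_imp_sigma_finite prob_space_PM)
  have "integrable (distr (PM sample \<Otimes>\<^sub>M PM ghost) (PM both) (merge sample ghost)) sup_ghost_gap"
    by (subst distr_merge) (auto intro: integrable_sup_ghost_gap)
  then have "integrable (PM sample \<Otimes>\<^sub>M PM ghost) (\<lambda>p. sup_ghost_gap (merge sample ghost p))"
    by (rule integrable_distr[OF measurable_merge])
  then show "integrable (PM sample) (\<lambda>S. \<integral>y. sup_ghost_gap (merge sample ghost (S, y)) \<partial>PM ghost)"
    by (rule integrable_fst')
  show "(\<integral>S. (\<integral>y. sup_ghost_gap (merge sample ghost (S, y)) \<partial>PM ghost) \<partial>PM sample)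
      = integral\<^sup>L (PM both) sup_ghost_gap"
    by (rule product_integral_fold[symmetric]) (auto intro: integrable_sup_ghost_gap)
qed

theorem expected_excess_risk_le:
  assumes n: "1 \<le> n" and R_nonneg: "0 \<le> R"
    and R: "\<And>x. (\<And>i. i < n \<Longrightarrow> x i \<in> B) \<Longrightarrow>
      sign_mean sample (\<lambda>\<sigma>. SUP w\<in>T. \<Sum>i<n. \<sigma> i * F w (x i)) \<le> R"
    and V: "V \<in> H"
    and erm_in_H: "\<And>S. S \<in> space (PM sample) \<Longrightarrow> What S \<in> H"
    and erm_le: "\<And>S. S \<in> space (PM sample) \<Longrightarrow>
      (\<Sum>i<n. F (What S) (S i)) \<le> (\<Sum>i<n. F V (S i))"
  shows "(\<integral>S. (\<integral>x. F (What S) x \<partial>D) - (\<integral>x. F V x \<partial>D) \<partial>PM sample) \<le> 2 * R / n"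
proof (cases "integrable (PM sample) (\<lambda>S. (\<integral>x. F (What S) x \<partial>D) - (\<integral>x. F V x \<partial>D))")
  case False
  then show ?thesis using R_nonneg by (simp add: not_integrable_integral_eq)
next
  case True
  interpret P: prob_space "PM sample" by (rule prob_space_PM)
  define \<Phi> where "\<Phi> S = (\<integral>y. sup_ghost_gap (merge sample ghost (S, y)) \<partial>PM ghost)" for S
  define U where "U S = (\<Phi> S + (\<Sum>i<n. F V (S i))) / n - (\<integral>x. F V x \<partial>D)" for S
  have n_pos: "0 < real n" using n by simp
  have U_integrable: "integrable (PM sample) U"
    unfolding U_def \<Phi>_def
    using integral_merge_sup_ghost_gap(1) integral_sum_components(1)[OF V, of "\<lambda>i. i"] by auto
  have "AE S in PM sample. (\<integral>x. F (What S) x \<partial>D) - (\<integral>x. F V x \<partial>D) \<le> U S"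
    using AE_PM_in_B[OF finite_lessThan] AE_space
  proof eventually_elim
    case (elim S)
    have "n * (\<integral>x. F (What S) x \<partial>D) - (\<Sum>i<n. F (What S) (S i)) \<le> \<Phi> S"
      unfolding \<Phi>_def using elim erm_in_H by (intro deviation_le_integral_sup_ghost_gap) auto
    then have "n * (\<integral>x. F (What S) x \<partial>D) \<le> \<Phi> S + (\<Sum>i<n. F V (S i))"
      using erm_le[OF elim(2)] by linarith
    then show ?case
      unfolding U_def using n_pos by (simp add: field_simps)
  qed
  then have "(\<integral>S. (\<integral>x. F (What S) x \<partial>D) - (\<integral>x. F V x \<partial>D) \<partial>PM sample)
      \<le> integral\<^sup>L (PM sample) U"
    by (rule integral_mono_AE[OF True U_integrable])
  also have "\<dots> = integral\<^sup>L (PM both) sup_ghost_gap / n"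
    unfolding U_def \<Phi>_def
    using integral_merge_sup_ghost_gap integral_sum_components[OF V, of "\<lambda>i. i"] n_pos P.prob_space
    by (simp add: field_simps)
  also have "\<dots> \<le> 2 * R / n"
    using integral_sup_ghost_gap_le[OF R] n_pos by (simp add: divide_right_mono)
  finally show ?thesis .
qed

end

lemma ghost_sample_matrix_loss:
  assumes G: "0 \<le> G" and W0: "is_matrix k m W0" and lip: "lipschitz_loss k G l"
    and D: "unit_ball_dist m D"
  shows "ghost_sample D (\<lambda>W x. l (mat_vec k m W x)) (hyp_set k m W0) (rational_hyp_set k m W0)
    {x. vec_norm m x \<le> 1} (\<lambda>x. \<bar>l (\<lambda>_. 0)\<bar> + G * (frob_norm k m W0 + 1) * vec_norm m x)
    (\<bar>l (\<lambda>_. 0)\<bar> + G * (frob_norm k m W0 + 1))"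
proof (rule ghost_sample.intro)
  show "prob_space D" using D unfolding unit_ball_dist_def by simp
  show "(\<lambda>x. l (mat_vec k m W x)) \<in> borel_measurable D" for W
    using D unfolding unit_ball_dist_def by (intro measurable_loss_mat_vec[OF lip]) simp
  show "AE x in D. x \<in> {x. vec_norm m x \<le> 1}"
    using D unfolding unit_ball_dist_def vec_norm_def by simp
  show "rational_hyp_set k m W0 \<noteq> {}" using center_in_rational_hyp_set[OF W0] by blast
  show "\<bar>l (mat_vec k m W x)\<bar> \<le> \<bar>l (\<lambda>_. 0)\<bar> + G * (frob_norm k m W0 + 1) * vec_norm m x"
    if "W \<in> hyp_set k m W0" for W x
    using abs_loss_mat_vec_le[OF lip G that] .
  show "\<bar>l (mat_vec k m W x)\<bar> \<le> \<bar>l (\<lambda>_. 0)\<bar> + G * (frob_norm k m W0 + 1)"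
    if "W \<in> hyp_set k m W0" "x \<in> {x. vec_norm m x \<le> 1}" for W x
    using abs_loss_mat_vec_le_on_ball[OF lip G] that by simp
  show "\<exists>W\<in>rational_hyp_set k m W0. \<forall>x\<in>X. \<bar>l (mat_vec k m V x) - l (mat_vec k m W x)\<bar> \<le> \<epsilon>"
    if "V \<in> hyp_set k m W0" "finite X" "0 < \<epsilon>" for V X \<epsilon>
    using rational_hyp_set_pointwise_dense[OF lip G W0 that] .
qed (rule rational_hyp_set_subset, rule countable_rational_hyp_set)

theorem erm_expected_excess_risk_le:
  assumes G: "0 \<le> G" and n: "1 \<le> n" and W0: "is_matrix k m W0" and lip: "lipschitz_loss k G l"
    and D: "unit_ball_dist m D" and Wstar: "Wstar \<in> hyp_set k m W0"
    and erm: "\<And>S. S \<in> space (sample_dist n D) \<Longrightarrow>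
      What S \<in> hyp_set k m W0 \<and> emp_risk k m n l S (What S) \<le> emp_risk k m n l S Wstar"
  shows "(\<integral>S. pop_risk k m D l (What S) - pop_risk k m D l Wstar \<partial>sample_dist n D)
    \<le> 2 * sqrt 3 * G * sqrt k / sqrt n"
proof -
  interpret ghost_sample D "\<lambda>W x. l (mat_vec k m W x)" "hyp_set k m W0" "rational_hyp_set k m W0"
    "{x. vec_norm m x \<le> 1}" "\<lambda>x. \<bar>l (\<lambda>_. 0)\<bar> + G * (frob_norm k m W0 + 1) * vec_norm m x"
    "\<bar>l (\<lambda>_. 0)\<bar> + G * (frob_norm k m W0 + 1)" n
    using ghost_sample_matrix_loss[OF G W0 lip D] .
  have "(\<integral>S. pop_risk k m D l (What S) - pop_risk k m D l Wstar \<partial>sample_dist n D)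
      \<le> 2 * (sqrt 3 * G * sqrt (real k * real n)) / n"
    unfolding pop_risk_def sample_dist_def
  proof (rule expected_excess_risk_le[OF n _ _ Wstar])
    show "sign_mean {..<n}
          (\<lambda>\<sigma>. SUP W\<in>rational_hyp_set k m W0. \<Sum>i<n. \<sigma> i * l (mat_vec k m W (x i)))
        \<le> sqrt 3 * G * sqrt (real k * real n)"
      if "\<And>i. i < n \<Longrightarrow> x i \<in> {x. vec_norm m x \<le> 1}" for x
      using that center_in_rational_hyp_set[OF W0]
      by (intro rademacher_loss_class_le[OF lip G rational_hyp_set_subset]) auto
    show "(\<Sum>i<n. l (mat_vec k m (What S) (S i))) \<le> (\<Sum>i<n. l (mat_vec k m Wstar (S i)))"
      if "S \<in> space (PM {..<n})" for S
      using erm[of S] that n unfolding emp_risk_def sample_dist_def by (simp add: divide_le_cancel)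
  qed (use G erm in \<open>auto simp: sample_dist_def\<close>)
  also have "\<dots> = 2 * sqrt 3 * G * sqrt k / sqrt n"
    using n by (simp add: real_sqrt_mult field_simps)
  finally show ?thesis .
qed

theorem theorem5:
  fixes G :: real
  assumes "0 \<le> G"
  shows "\<exists>C::real. \<forall>(k::nat) (n::nat) (m::nat) W0 l D What Wstar.
    (1 \<le> n \<and> is_matrix k m W0 \<and> convex_loss k l \<and> lipschitz_loss k G l \<and>
     unit_ball_dist m D \<and>
     Wstar \<in> hyp_set k m W0 \<and> (\<forall>W\<in>hyp_set k m W0. pop_risk k m D l Wstar \<le> pop_risk k m D l W) \<and>
     (\<forall>S\<in>space (sample_dist n D). What S \<in> hyp_set k m W0 \<and>
        (\<forall>W\<in>hyp_set k m W0. emp_risk k m n l S (What S) \<le> emp_risk k m n l S W)))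
    \<longrightarrow> (\<integral>S. pop_risk k m D l (What S) - pop_risk k m D l Wstar \<partial>(sample_dist n D))
          \<le> C * sqrt (real k) / sqrt (real n)"
proof (intro exI[of _ "2 * sqrt 3 * G"] allI impI, elim conjE)
  fix k n m :: nat and W0 l D What Wstar
  assume "1 \<le> n" "is_matrix k m W0" "lipschitz_loss k G l" "unit_ball_dist m D"
    and Wstar: "Wstar \<in> hyp_set k m W0"
    and erm: "\<forall>S\<in>space (sample_dist n D). What S \<in> hyp_set k m W0 \<and>
        (\<forall>W\<in>hyp_set k m W0. emp_risk k m n l S (What S) \<le> emp_risk k m n l S W)"
  then show "(\<integral>S. pop_risk k m D l (What S) - pop_risk k m D l Wstar \<partial>(sample_dist n D))
      \<le> 2 * sqrt 3 * G * sqrt (real k) / sqrt (real n)"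
    using erm Wstar by (intro erm_expected_excess_risk_le[OF assms]) blast+
qed

end
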